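(* Let $\{S_\lambda:\lambda\geq0\}$ and $\{T_\mu:\mu\geq0\}$ be strongly continuous semigroups of isometries on a Hilbert space $\mathcal{H}$ satisfying $S_\lambda T_\mu=e^{i\lambda\mu}T_\mu S_\lambda$ for all $\lambda,\mu\geq0$. Then there exist a Hilbert space $\mathcal{K}\supseteq\mathcal{H}$ and strongly continuous unitary groups $\{U_\lambda:\lambda\in\mathbb{R}\}$, $\{V_\mu:\mu\in\mathbb{R}\}$ on $\mathcal{K}$ satisfying $U_\lambda V_\mu=e^{i\lambda\mu}V_\mu U_\lambda$ for all real $\lambda,\mu$, such that $P_{\mathcal{H}}U_\lambda|_{\mathcal{H}}=S_\lambda$ and $P_{\mathcal{H}}V_\mu|_{\mathcal{H}}=T_\mu$ for all $\lambda,\mu\geq0$, where $P_{\mathcal{H}}$ is the orthogonal projection of $\mathcal{K}$ onto $\mathcal{H}$. *)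

theory Defs
  imports "HOL-Analysis.Analysis"
begin

text \<open>The distribution has no class of complex inner product spaces, so a complex
Hilbert space is represented explicitly by its carrier and operations.
Convention: the inner product is linear in the first argument.\<close>

record 'v chs =
  carrier :: "'v set"
  zero :: 'v
  add :: "'v \<Rightarrow> 'v \<Rightarrow> 'v"
  smult :: "complex \<Rightarrow> 'v \<Rightarrow> 'v"
  inner :: "'v \<Rightarrow> 'v \<Rightarrow> complex"

definition chs_sub :: "'v chs \<Rightarrow> 'v \<Rightarrow> 'v \<Rightarrow> 'v" where
  "chs_sub K x y = add K x (smult K (-1) y)"

definition chs_norm :: "'v chs \<Rightarrow> 'v \<Rightarrow> real" where
  "chs_norm K x = sqrt (Re (inner K x x))"

definition chs_dist :: "'v chs \<Rightarrow> 'v \<Rightarrow> 'v \<Rightarrow> real" where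
  "chs_dist K x y = chs_norm K (chs_sub K x y)"

definition complex_hilbert_space :: "'v chs \<Rightarrow> bool" where
  "complex_hilbert_space K \<longleftrightarrow>
     zero K \<in> carrier K
   \<and> (\<forall>x\<in>carrier K. \<forall>y\<in>carrier K. add K x y \<in> carrier K)
   \<and> (\<forall>c. \<forall>x\<in>carrier K. smult K c x \<in> carrier K)
   \<and> (\<forall>x\<in>carrier K. \<forall>y\<in>carrier K. \<forall>z\<in>carrier K. add K (add K x y) z = add K x (add K y z))
   \<and> (\<forall>x\<in>carrier K. \<forall>y\<in>carrier K. add K x y = add K y x)
   \<and> (\<forall>x\<in>carrier K. add K (zero K) x = x)
   \<and> (\<forall>x\<in>carrier K. \<exists>y\<in>carrier K. add K x y = zero K)
   \<and> (\<forall>c. \<forall>x\<in>carrier K. \<forall>y\<in>carrier K. smult K c (add K x y) = add K (smult K c x) (smult K c y))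
   \<and> (\<forall>a b. \<forall>x\<in>carrier K. smult K (a + b) x = add K (smult K a x) (smult K b x))
   \<and> (\<forall>a b. \<forall>x\<in>carrier K. smult K (a * b) x = smult K a (smult K b x))
   \<and> (\<forall>x\<in>carrier K. smult K 1 x = x)
   \<and> (\<forall>x\<in>carrier K. \<forall>y\<in>carrier K. \<forall>z\<in>carrier K. inner K (add K x y) z = inner K x z + inner K y z)
   \<and> (\<forall>c. \<forall>x\<in>carrier K. \<forall>y\<in>carrier K. inner K (smult K c x) y = c * inner K x y)
   \<and> (\<forall>x\<in>carrier K. \<forall>y\<in>carrier K. inner K x y = cnj (inner K y x))
   \<and> (\<forall>x\<in>carrier K. 0 \<le> Re (inner K x x))
   \<and> (\<forall>x\<in>carrier K. inner K x x = 0 \<longrightarrow> x = zero K)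
   \<and> (\<forall>X. (\<forall>n. X n \<in> carrier K) \<and>
          (\<forall>e>0. \<exists>N. \<forall>m\<ge>N. \<forall>n\<ge>N. chs_dist K (X m) (X n) < e)
        \<longrightarrow> (\<exists>L\<in>carrier K. (\<lambda>n. chs_dist K (X n) L) \<longlonglongrightarrow> 0))"

definition lin_op :: "'v chs \<Rightarrow> 'w chs \<Rightarrow> ('v \<Rightarrow> 'w) \<Rightarrow> bool" where
  "lin_op H K f \<longleftrightarrow>
     (\<forall>x\<in>carrier H. f x \<in> carrier K)
   \<and> (\<forall>x\<in>carrier H. \<forall>y\<in>carrier H. f (add H x y) = add K (f x) (f y))
   \<and> (\<forall>c. \<forall>x\<in>carrier H. f (smult H c x) = smult K c (f x))"

definition isometry :: "'v chs \<Rightarrow> 'w chs \<Rightarrow> ('v \<Rightarrow> 'w) \<Rightarrow> bool" where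
  "isometry H K f \<longleftrightarrow> lin_op H K f
     \<and> (\<forall>x\<in>carrier H. \<forall>y\<in>carrier H. inner K (f x) (f y) = inner H x y)"

definition unitary :: "'v chs \<Rightarrow> ('v \<Rightarrow> 'v) \<Rightarrow> bool" where
  "unitary K f \<longleftrightarrow> isometry K K f \<and> f ` carrier K = carrier K"

definition sc_isometry_semigroup :: "'v chs \<Rightarrow> (real \<Rightarrow> 'v \<Rightarrow> 'v) \<Rightarrow> bool" where
  "sc_isometry_semigroup H S \<longleftrightarrow>
     (\<forall>t\<ge>0. isometry H H (S t))
   \<and> (\<forall>x\<in>carrier H. S 0 x = x)
   \<and> (\<forall>s\<ge>0. \<forall>t\<ge>0. \<forall>x\<in>carrier H. S (s + t) x = S s (S t x))
   \<and> (\<forall>x\<in>carrier H. \<forall>t\<ge>0. ((\<lambda>s. chs_dist H (S s x) (S t x)) \<longlongrightarrow> 0) (at t within {0..}))"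

definition sc_unitary_group :: "'v chs \<Rightarrow> (real \<Rightarrow> 'v \<Rightarrow> 'v) \<Rightarrow> bool" where
  "sc_unitary_group K U \<longleftrightarrow>
     (\<forall>t. unitary K (U t))
   \<and> (\<forall>x\<in>carrier K. U 0 x = x)
   \<and> (\<forall>s t. \<forall>x\<in>carrier K. U (s + t) x = U s (U t x))
   \<and> (\<forall>x\<in>carrier K. \<forall>t. ((\<lambda>s. chs_dist K (U s x) (U t x)) \<longlongrightarrow> 0) (at t))"

definition orth_proj :: "'v chs \<Rightarrow> 'v set \<Rightarrow> 'v \<Rightarrow> 'v" where
  "orth_proj K M v = (THE w. w \<in> M \<and> (\<forall>m\<in>M. inner K (chs_sub K v w) m = 0))"

end

theory Submission
  imports Defs
begin

text \<open>Since \<open>S\<close> and \<open>T\<close> consist of isometries, the dilation can even be taken to be an extension.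
  It is the inductive limit of copies of \<open>H\<close> along the two-parameter system of isometries
  \<open>W(a, b) = S\<^sub>a T\<^sub>b\<close> (\<open>a, b \<ge> 0\<close>), which by the Weyl relation compose up to a phase:
  \<open>W(a, b) W(c, e) = cis (- b c) W(a + c, b + e)\<close>. Its elements are the bounded coherent families
  \<open>f : \<real>\<^sup>2 \<rightarrow> H\<close>, coherence meaning \<open>f (a, b) = cis (- a e) W(c, e)\<^sup>* f (a + c, b + e)\<close>. Along such a
  family \<open>\<parallel>f (a, b)\<parallel>\<close> increases, so the inner product \<open>\<langle>f, g\<rangle> = lim \<langle>f q, g q\<rangle>\<close> for
  \<open>q \<rightarrow> (\<infinity>, \<infinity>)\<close> exists by polarization, and completeness is inherited pointwise from \<open>H\<close>.
  The shifts \<open>U\<^sub>l f (a, b) = cis (- l b) f (a + l, b)\<close> and \<open>V\<^sub>m f (a, b) = f (a, b + m)\<close> are unitary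
  groups satisfying the Weyl relation exactly, and the embedding \<open>J x (a, b) = W(a, b) x\<close> intertwines
  them with \<open>S\<close> and \<open>T\<close>; so \<open>J H\<close> is invariant and the compressions are \<open>S\<close> and \<open>T\<close>. Strong
  continuity holds on \<open>J H\<close> because it holds for \<open>S\<close> and \<open>T\<close>, and the Weyl relation carries it to
  the dense set of vectors \<open>V\<^sub>-\<^sub>c U\<^sub>-\<^sub>c J y\<close>.\<close>

section \<open>Complex Hilbert spaces\<close>

locale complex_hilbert =
  fixes X :: "'v chs"
  assumes zero_closed [simp, intro]: "zero X \<in> carrier X"
    and add_closed [simp, intro]: "\<And>x y. x \<in> carrier X \<Longrightarrow> y \<in> carrier X \<Longrightarrow> add X x y \<in> carrier X"
    and smult_closed [simp, intro]: "\<And>c x. x \<in> carrier X \<Longrightarrow> smult X c x \<in> carrier X"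
    and chs_add_assoc: "\<And>x y z. x \<in> carrier X \<Longrightarrow> y \<in> carrier X \<Longrightarrow> z \<in> carrier X \<Longrightarrow>
      add X (add X x y) z = add X x (add X y z)"
    and chs_add_commute: "\<And>x y. x \<in> carrier X \<Longrightarrow> y \<in> carrier X \<Longrightarrow> add X x y = add X y x"
    and chs_add_zero_left [simp]: "\<And>x. x \<in> carrier X \<Longrightarrow> add X (zero X) x = x"
    and chs_add_inverse: "\<And>x. x \<in> carrier X \<Longrightarrow> \<exists>y\<in>carrier X. add X x y = zero X"
    and chs_smult_add_right: "\<And>c x y. x \<in> carrier X \<Longrightarrow> y \<in> carrier X \<Longrightarrow>
      smult X c (add X x y) = add X (smult X c x) (smult X c y)"
    and chs_smult_add_left: "\<And>a b x. x \<in> carrier X \<Longrightarrow>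
      smult X (a + b) x = add X (smult X a x) (smult X b x)"
    and chs_smult_smult [symmetric, simp]: "\<And>a b x. x \<in> carrier X \<Longrightarrow>
      smult X (a * b) x = smult X a (smult X b x)"
    and chs_smult_one [simp]: "\<And>x. x \<in> carrier X \<Longrightarrow> smult X 1 x = x"
    and cinner_add_left [simp]: "\<And>x y z. x \<in> carrier X \<Longrightarrow> y \<in> carrier X \<Longrightarrow> z \<in> carrier X \<Longrightarrow>
      inner X (add X x y) z = inner X x z + inner X y z"
    and cinner_smult_left [simp]: "\<And>c x y. x \<in> carrier X \<Longrightarrow> y \<in> carrier X \<Longrightarrow>
      inner X (smult X c x) y = c * inner X x y"
    and cinner_commute: "\<And>x y. x \<in> carrier X \<Longrightarrow> y \<in> carrier X \<Longrightarrow> inner X x y = cnj (inner X y x)"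
    and cinner_self_nonneg: "\<And>x. x \<in> carrier X \<Longrightarrow> 0 \<le> Re (inner X x x)"
    and cinner_self_eq_zeroD: "\<And>x. x \<in> carrier X \<Longrightarrow> inner X x x = 0 \<Longrightarrow> x = zero X"
    and Cauchy_convergent: "\<And>Y. (\<And>n. Y n \<in> carrier X) \<Longrightarrow>
      (\<forall>e>0. \<exists>N. \<forall>m\<ge>N. \<forall>n\<ge>N. chs_dist X (Y m) (Y n) < e) \<Longrightarrow>
      \<exists>L\<in>carrier X. (\<lambda>n. chs_dist X (Y n) L) \<longlonglongrightarrow> 0"

lemma complex_hilbert_iff: "complex_hilbert X \<longleftrightarrow> complex_hilbert_space X"
  by (simp only: complex_hilbert_def complex_hilbert_space_def Ball_def all_simps imp_conjL conj_assoc)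

lemma lin_op_add:
  "lin_op X Y A \<Longrightarrow> x \<in> carrier X \<Longrightarrow> y \<in> carrier X \<Longrightarrow> A (add X x y) = add Y (A x) (A y)"
  by (simp add: lin_op_def)

lemma lin_op_smult: "lin_op X Y A \<Longrightarrow> x \<in> carrier X \<Longrightarrow> A (smult X c x) = smult Y c (A x)"
  by (simp add: lin_op_def)

lemma isometry_lin_op: "isometry X Y A \<Longrightarrow> lin_op X Y A"
  by (simp add: isometry_def)

lemma isometry_closed: "isometry X Y A \<Longrightarrow> x \<in> carrier X \<Longrightarrow> A x \<in> carrier Y"
  by (simp add: isometry_def lin_op_def)

lemma isometry_cinner:
  "isometry X Y A \<Longrightarrow> x \<in> carrier X \<Longrightarrow> y \<in> carrier X \<Longrightarrow> inner Y (A x) (A y) = inner X x y"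
  by (simp add: isometry_def)

lemma isometry_norm: "isometry X Y A \<Longrightarrow> x \<in> carrier X \<Longrightarrow> chs_norm Y (A x) = chs_norm X x"
  by (simp add: isometry_def chs_norm_def)

lemma isometry_comp: "isometry X Y A \<Longrightarrow> isometry Y Z B \<Longrightarrow> isometry X Z (\<lambda>x. B (A x))"
  by (simp add: isometry_def lin_op_def)

context complex_hilbert
begin

lemma cinner_add_right [simp]:
  "x \<in> carrier X \<Longrightarrow> y \<in> carrier X \<Longrightarrow> z \<in> carrier X \<Longrightarrow>
    inner X x (add X y z) = inner X x y + inner X x z"
  by (simp add: cinner_commute[of x])

lemma cinner_smult_right [simp]:
  "x \<in> carrier X \<Longrightarrow> y \<in> carrier X \<Longrightarrow> inner X x (smult X c y) = cnj c * inner X x y"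
  by (simp add: cinner_commute[of x])

lemma cinner_zero_left [simp]: "y \<in> carrier X \<Longrightarrow> inner X (zero X) y = 0"
  using cinner_add_left[of "zero X" "zero X" y] by simp

lemma cinner_zero_right [simp]: "y \<in> carrier X \<Longrightarrow> inner X y (zero X) = 0"
  by (simp add: cinner_commute[of y])

lemma diff_closed [simp, intro]: "x \<in> carrier X \<Longrightarrow> y \<in> carrier X \<Longrightarrow> chs_sub X x y \<in> carrier X"
  by (simp add: chs_sub_def)

lemma cinner_diff_left [simp]:
  "x \<in> carrier X \<Longrightarrow> y \<in> carrier X \<Longrightarrow> z \<in> carrier X \<Longrightarrow>
    inner X (chs_sub X x y) z = inner X x z - inner X y z"
  by (simp add: chs_sub_def)

lemma cinner_diff_right [simp]:
  "x \<in> carrier X \<Longrightarrow> y \<in> carrier X \<Longrightarrow> z \<in> carrier X \<Longrightarrow>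
    inner X z (chs_sub X x y) = inner X z x - inner X z y"
  by (simp add: chs_sub_def)

lemma chs_eq_zeroI: "x \<in> carrier X \<Longrightarrow> (\<And>z. z \<in> carrier X \<Longrightarrow> inner X x z = 0) \<Longrightarrow> x = zero X"
  using cinner_self_eq_zeroD by blast

lemma chs_eqI:
  assumes x: "x \<in> carrier X" and y: "y \<in> carrier X"
    and eq: "\<And>z. z \<in> carrier X \<Longrightarrow> inner X x z = inner X y z"
  shows "x = y"
proof -
  have "chs_sub X x y = zero X" "add X (smult X (-1) y) y = zero X"
    by (rule chs_eq_zeroI; simp add: x y eq)+
  then have "y = add X (chs_sub X x y) y"
    using y by simp
  also have "\<dots> = add X x (add X (smult X (-1) y) y)"
    using x y by (simp add: chs_sub_def chs_add_assoc)
  also have "\<dots> = x"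
    using x \<open>add X (smult X (-1) y) y = zero X\<close> by (simp add: chs_add_commute[of x])
  finally show ?thesis ..
qed

lemma chs_diff_self [simp]: "x \<in> carrier X \<Longrightarrow> chs_sub X x x = zero X"
  by (rule chs_eq_zeroI) auto

lemma chs_norm_nonneg [simp]: "x \<in> carrier X \<Longrightarrow> 0 \<le> chs_norm X x"
  by (simp add: chs_norm_def cinner_self_nonneg)

lemma chs_norm_power2: "x \<in> carrier X \<Longrightarrow> (chs_norm X x)\<^sup>2 = Re (inner X x x)"
  by (simp add: chs_norm_def cinner_self_nonneg)

lemma cinner_self: "inner X x x = complex_of_real ((chs_norm X x)\<^sup>2)" if "x \<in> carrier X"
proof -
  have "inner X x x = cnj (inner X x x)"
    by (rule cinner_commute[OF that that])
  then have "Im (inner X x x) = 0"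
    by (simp add: complex_eq_iff)
  then show ?thesis
    using that by (simp add: chs_norm_power2 complex_eq_iff)
qed

lemma chs_norm_zero [simp]: "chs_norm X (zero X) = 0"
  by (simp add: chs_norm_def)

lemma chs_norm_eq_zero_iff: "x \<in> carrier X \<Longrightarrow> chs_norm X x = 0 \<longleftrightarrow> x = zero X"
  using cinner_self cinner_self_eq_zeroD by fastforce

lemma chs_norm_smult: "chs_norm X (smult X c x) = cmod c * chs_norm X x" if "x \<in> carrier X"
proof -
  have "inner X (smult X c x) (smult X c x) = (c * cnj c) * inner X x x"
    using that by (simp add: algebra_simps)
  also have "c * cnj c = complex_of_real ((cmod c)\<^sup>2)"
    by (rule complex_norm_square[symmetric])
  finally have "Re (inner X (smult X c x) (smult X c x)) = (cmod c)\<^sup>2 * Re (inner X x x)"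
    by simp
  then show ?thesis
    unfolding chs_norm_def by (simp add: real_sqrt_mult)
qed

lemma cinner_Cauchy_Schwarz:
  assumes x: "x \<in> carrier X" and y: "y \<in> carrier X"
  shows "cmod (inner X x y) \<le> chs_norm X x * chs_norm X y"
proof (cases "y = zero X")
  case True
  then show ?thesis using x by simp
next
  case False
  define r where "r = (chs_norm X y)\<^sup>2"
  have yy: "inner X y y = complex_of_real r"
    using y by (simp add: cinner_self r_def)
  have r: "r > 0"
    using False y yy cinner_self_eq_zeroD[OF y] unfolding r_def by fastforce
  define a where "a = inner X x y"
  define t where "t = a / complex_of_real r"
  define w where "w = add X x (smult X (-t) y)"
  have "inner X w w = inner X x x + (- cnj t * a + - t * cnj a + t * cnj t * complex_of_real r)"
    using x y by (simp add: w_def yy a_def cinner_commute[of y x] algebra_simps)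
  also have "- cnj t * a + - t * cnj a + t * cnj t * complex_of_real r = - complex_of_real ((cmod a)\<^sup>2 / r)"
    using r unfolding t_def by (simp add: field_simps complex_norm_square[symmetric] power2_eq_square)
  finally have "Re (inner X w w) = (chs_norm X x)\<^sup>2 - (cmod a)\<^sup>2 / r"
    using x by (simp add: chs_norm_power2)
  moreover have "0 \<le> Re (inner X w w)"
    using x y unfolding w_def by (intro cinner_self_nonneg) simp
  ultimately have "(cmod a)\<^sup>2 / r \<le> (chs_norm X x)\<^sup>2"
    by linarith
  then have "(cmod a)\<^sup>2 \<le> (chs_norm X x)\<^sup>2 * r"
    using r by (simp add: field_simps)
  also have "\<dots> = (chs_norm X x * chs_norm X y)\<^sup>2"
    by (simp add: r_def power_mult_distrib)
  finally show ?thesis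
    unfolding a_def by (rule power2_le_imp_le) (simp add: x y)
qed

lemma Re_cinner_commute: "x \<in> carrier X \<Longrightarrow> y \<in> carrier X \<Longrightarrow> Re (inner X y x) = Re (inner X x y)"
  by (subst cinner_commute[of y x]) auto

lemma chs_norm_triangle:
  assumes x: "x \<in> carrier X" and y: "y \<in> carrier X"
  shows "chs_norm X (add X x y) \<le> chs_norm X x + chs_norm X y"
proof (rule power2_le_imp_le)
  have "Re (inner X x y) \<le> chs_norm X x * chs_norm X y"
    using cinner_Cauchy_Schwarz[OF x y] complex_Re_le_cmod order_trans by blast
  then show "(chs_norm X (add X x y))\<^sup>2 \<le> (chs_norm X x + chs_norm X y)\<^sup>2"
    using x y by (simp add: chs_norm_power2 Re_cinner_commute[of y x] power2_sum)
qed (use x y in simp)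

lemma chs_dist_nonneg [simp]: "x \<in> carrier X \<Longrightarrow> y \<in> carrier X \<Longrightarrow> 0 \<le> chs_dist X x y"
  by (simp add: chs_dist_def)

lemma chs_dist_commute: "x \<in> carrier X \<Longrightarrow> y \<in> carrier X \<Longrightarrow> chs_dist X x y = chs_dist X y x"
proof -
  assume x: "x \<in> carrier X" and y: "y \<in> carrier X"
  have "chs_sub X y x = smult X (-1) (chs_sub X x y)"
    by (rule chs_eqI) (use x y in auto)
  then show ?thesis
    using x y by (simp add: chs_dist_def chs_norm_smult)
qed

lemma chs_dist_triangle:
  "x \<in> carrier X \<Longrightarrow> y \<in> carrier X \<Longrightarrow> z \<in> carrier X \<Longrightarrow>
    chs_dist X x z \<le> chs_dist X x y + chs_dist X y z"
proof -
  assume x: "x \<in> carrier X" and y: "y \<in> carrier X" and z: "z \<in> carrier X"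
  have "chs_sub X x z = add X (chs_sub X x y) (chs_sub X y z)"
    by (rule chs_eqI) (use x y z in auto)
  then show ?thesis
    using x y z by (simp add: chs_dist_def chs_norm_triangle)
qed

lemma chs_norm_le_add_dist:
  assumes x: "x \<in> carrier X" and y: "y \<in> carrier X"
  shows "chs_norm X x \<le> chs_norm X y + chs_dist X x y"
proof -
  have "x = add X y (chs_sub X x y)"
    by (rule chs_eqI) (use x y in auto)
  then show ?thesis
    using x y chs_norm_triangle[of y "chs_sub X x y"] by (simp add: chs_dist_def)
qed

lemma lin_op_diff:
  "lin_op X Y A \<Longrightarrow> x \<in> carrier X \<Longrightarrow> y \<in> carrier X \<Longrightarrow> A (chs_sub X x y) = chs_sub Y (A x) (A y)"
  by (simp add: chs_sub_def lin_op_def)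

lemma isometry_dist:
  "isometry X Y A \<Longrightarrow> x \<in> carrier X \<Longrightarrow> y \<in> carrier X \<Longrightarrow> chs_dist Y (A x) (A y) = chs_dist X x y"
  by (simp add: chs_dist_def lin_op_diff[OF isometry_lin_op, symmetric] isometry_norm)

lemma chs_norm_le_if_cinner_isometry:
  assumes A: "isometry X X A" and x: "x \<in> carrier X" and y: "y \<in> carrier X"
    and eq: "inner X x x = c * inner X y (A x)" and c: "cmod c = 1"
  shows "chs_norm X x \<le> chs_norm X y"
proof -
  have "(chs_norm X x)\<^sup>2 = Re (c * inner X y (A x))"
    using x eq by (simp add: chs_norm_power2)
  also have "\<dots> \<le> cmod (inner X y (A x))"
    using complex_Re_le_cmod[of "c * inner X y (A x)"] c by (simp add: norm_mult)
  also have "\<dots> \<le> chs_norm X y * chs_norm X x"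
    using cinner_Cauchy_Schwarz[OF y isometry_closed[OF A x]] isometry_norm[OF A x] by simp
  finally have "chs_norm X x * chs_norm X x \<le> chs_norm X y * chs_norm X x"
    by (simp add: power2_eq_square)
  then show ?thesis
    using x y by (cases "chs_norm X x = 0") (simp_all add: mult_le_cancel_right less_le)
qed

lemma cinner_diff_bound:
  "x \<in> carrier X \<Longrightarrow> y \<in> carrier X \<Longrightarrow> z \<in> carrier X \<Longrightarrow>
    cmod (inner X x z - inner X y z) \<le> chs_dist X x y * chs_norm X z"
  using cinner_Cauchy_Schwarz[of "chs_sub X x y" z] by (simp add: chs_dist_def)

lemma chs_dist_power2:
  "x \<in> carrier X \<Longrightarrow> y \<in> carrier X \<Longrightarrow>
    (chs_dist X x y)\<^sup>2 = (chs_norm X x)\<^sup>2 - 2 * Re (inner X x y) + (chs_norm X y)\<^sup>2"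
  by (simp add: chs_dist_def chs_norm_power2 Re_cinner_commute[of y x])

lemma cinner_polarization:
  assumes x: "x \<in> carrier X" and y: "y \<in> carrier X"
  shows "inner X x y =
    (complex_of_real ((chs_norm X (add X x (smult X 1 y)))\<^sup>2)
     - complex_of_real ((chs_norm X (add X x (smult X (-1) y)))\<^sup>2)
     + \<i> * complex_of_real ((chs_norm X (add X x (smult X \<i> y)))\<^sup>2)
     - \<i> * complex_of_real ((chs_norm X (add X x (smult X (-\<i>) y)))\<^sup>2)) / 4"
proof -
  have "complex_of_real ((chs_norm X (add X x (smult X c y)))\<^sup>2) =
      inner X x x + cnj c * inner X x y + c * inner X y x + c * cnj c * inner X y y" for c
    using x y cinner_self[of "add X x (smult X c y)", symmetric] by (simp add: algebra_simps)
  then show ?thesis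
    by (simp add: algebra_simps)
qed

lemma cinner_tendsto:
  assumes u: "\<And>n. u n \<in> carrier X" and v: "v \<in> carrier X" and z: "z \<in> carrier X"
    and lim: "(\<lambda>n. chs_dist X (u n) v) \<longlonglongrightarrow> 0"
  shows "(\<lambda>n. inner X (u n) z) \<longlonglongrightarrow> inner X v z"
proof -
  have "(\<lambda>n. inner X (u n) z - inner X v z) \<longlonglongrightarrow> 0"
  proof (rule Lim_null_comparison)
    show "\<forall>\<^sub>F n in sequentially. norm (inner X (u n) z - inner X v z) \<le> chs_dist X (u n) v * chs_norm X z"
      using cinner_diff_bound u v z by simp
    show "(\<lambda>n. chs_dist X (u n) v * chs_norm X z) \<longlonglongrightarrow> 0"
      by (rule tendsto_mult_left_zero[OF lim])
  qed
  then show ?thesis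
    by (rule LIM_zero_cancel)
qed

lemma chs_dist_limit_le:
  assumes u: "\<And>n. u n \<in> carrier X" and v: "v \<in> carrier X" and w: "w \<in> carrier X"
    and lim: "(\<lambda>n. chs_dist X (u n) v) \<longlonglongrightarrow> 0"
    and bound: "\<And>n. n \<ge> N \<Longrightarrow> chs_dist X w (u n) \<le> r"
  shows "chs_dist X w v \<le> r"
proof (rule LIMSEQ_le_const)
  show "(\<lambda>n. r + chs_dist X (u n) v) \<longlonglongrightarrow> r"
    using tendsto_add[OF tendsto_const lim] by simp
  show "\<exists>N. \<forall>n\<ge>N. chs_dist X w v \<le> r + chs_dist X (u n) v"
    using chs_dist_triangle[OF w u v] bound by (metis add_right_mono order_trans)
qed

lemma Cauchy_if_dist_bound:
  assumes bound: "\<And>m n. (chs_dist X (Y m) (Y n))\<^sup>2 \<le> b m + b n" and b: "b \<longlonglongrightarrow> 0"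
  shows "\<forall>e>0. \<exists>N. \<forall>m\<ge>N. \<forall>n\<ge>N. chs_dist X (Y m) (Y n) < e"
proof (intro allI impI)
  fix e :: real
  assume e: "e > 0"
  then obtain N where N: "\<And>n. n \<ge> N \<Longrightarrow> \<bar>b n\<bar> < e\<^sup>2 / 2"
    using LIMSEQ_D[OF b, of "e\<^sup>2 / 2"] by auto
  have "chs_dist X (Y m) (Y n) < e" if "m \<ge> N" "n \<ge> N" for m n
  proof (rule power_less_imp_less_base)
    show "(chs_dist X (Y m) (Y n))\<^sup>2 < e\<^sup>2"
      using bound[of m n] N[OF \<open>m \<ge> N\<close>] N[OF \<open>n \<ge> N\<close>] by linarith
  qed (use e in simp)
  then show "\<exists>N. \<forall>m\<ge>N. \<forall>n\<ge>N. chs_dist X (Y m) (Y n) < e"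
    by blast
qed

lemma apollonius_identity:
  assumes "y \<in> carrier X" "u \<in> carrier X" "v \<in> carrier X"
  shows "(chs_dist X u v)\<^sup>2 = 2 * (chs_dist X y u)\<^sup>2 + 2 * (chs_dist X y v)\<^sup>2
    - 4 * (chs_dist X y (smult X (1/2) (add X u v)))\<^sup>2"
  using assms by (simp add: chs_dist_def chs_norm_power2 algebra_simps)

lemma best_approx_orthogonal:
  assumes M: "M \<subseteq> carrier X" "\<And>u v. u \<in> M \<Longrightarrow> v \<in> M \<Longrightarrow> add X u v \<in> M"
      "\<And>c u. u \<in> M \<Longrightarrow> smult X c u \<in> M"
    and y: "y \<in> carrier X" and m0: "m0 \<in> M"
    and min: "\<And>m. m \<in> M \<Longrightarrow> chs_dist X y m0 \<le> chs_dist X y m"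
    and m: "m \<in> M"
  shows "inner X (chs_sub X y m0) m = 0"
proof (rule ccontr)
  define w where "w = chs_sub X y m0"
  define a where "a = inner X w m"
  define s where "s = 1 / ((chs_norm X m)\<^sup>2 + 1)"
  define t where "t = complex_of_real s * a"
  have carrier: "m0 \<in> carrier X" "m \<in> carrier X" "w \<in> carrier X"
    using M(1) y m0 m by (auto simp: w_def)
  assume "inner X (chs_sub X y m0) m \<noteq> 0"
  then have a: "cmod a > 0"
    by (simp add: a_def w_def)
  have s: "s > 0" "s * (chs_norm X m)\<^sup>2 < 1"
    by (simp_all add: s_def add_nonneg_pos)
  have "inner X w (smult X t m) = complex_of_real s * (a * cnj a)"
    using carrier by (simp add: t_def a_def mult_ac)
  also have "a * cnj a = complex_of_real ((cmod a)\<^sup>2)"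
    by (rule complex_norm_square[symmetric])
  finally have Re_tm: "Re (inner X w (smult X t m)) = s * (cmod a)\<^sup>2"
    by simp
  have norm_tm: "chs_norm X (smult X t m) = s * cmod a * chs_norm X m"
    using carrier s by (simp add: t_def chs_norm_smult norm_mult)
  \<comment> \<open>replacing \<open>m0\<close> by \<open>m0 + t m \<in> M\<close> would decrease the distance to \<open>y\<close>\<close>
  have "chs_sub X y (add X m0 (smult X t m)) = chs_sub X w (smult X t m)"
    by (rule chs_eqI) (use carrier y in \<open>auto simp: w_def\<close>)
  then have "(chs_dist X y (add X m0 (smult X t m)))\<^sup>2 =
      (chs_norm X w)\<^sup>2 - 2 * s * (cmod a)\<^sup>2 + s\<^sup>2 * (cmod a)\<^sup>2 * (chs_norm X m)\<^sup>2"
    using chs_dist_power2[of w "smult X t m"] carrier Re_tm norm_tm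
    by (simp add: chs_dist_def power_mult_distrib)
  moreover have "chs_norm X w \<le> chs_dist X y (add X m0 (smult X t m))"
    unfolding w_def chs_dist_def[symmetric] using M m0 m by (intro min) auto
  then have "(chs_norm X w)\<^sup>2 \<le> (chs_dist X y (add X m0 (smult X t m)))\<^sup>2"
    using carrier by (simp add: power_mono)
  ultimately have "2 * s * (cmod a)\<^sup>2 \<le> s * (cmod a)\<^sup>2 * (s * (chs_norm X m)\<^sup>2)"
    by (simp add: power2_eq_square algebra_simps)
  also have "\<dots> < s * (cmod a)\<^sup>2 * 1"
    using s a by (intro mult_strict_left_mono) auto
  finally show False
    using s a by simp
qed

lemma isometry_dist_le_excess:
  assumes A: "isometry X X A" and y: "y \<in> carrier X" and u: "u \<in> carrier X" and v: "v \<in> carrier X"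
    and low: "\<And>w. w \<in> carrier X \<Longrightarrow> d \<le> (chs_dist X y (A w))\<^sup>2"
  shows "(chs_dist X u v)\<^sup>2 \<le> 2 * (chs_dist X y (A u))\<^sup>2 + 2 * (chs_dist X y (A v))\<^sup>2 - 4 * d"
proof -
  define mid where "mid = smult X (1/2) (add X u v)"
  have "A mid = smult X (1/2) (add X (A u) (A v))"
    using A u v by (simp add: mid_def isometry_def lin_op_def)
  then have "(chs_dist X u v)\<^sup>2 = 2 * (chs_dist X y (A u))\<^sup>2 + 2 * (chs_dist X y (A v))\<^sup>2
      - 4 * (chs_dist X y (A mid))\<^sup>2"
    using apollonius_identity[OF y isometry_closed[OF A u] isometry_closed[OF A v]]
      isometry_dist[OF A u v] by simp
  moreover have "d \<le> (chs_dist X y (A mid))\<^sup>2"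
    using u v by (intro low) (simp add: mid_def)
  ultimately show ?thesis
    by linarith
qed

lemma isometry_range_best_approx:
  assumes A: "isometry X X A" and y: "y \<in> carrier X"
  obtains z where "z \<in> carrier X" "\<And>x. x \<in> carrier X \<Longrightarrow> chs_dist X y (A z) \<le> chs_dist X y (A x)"
proof -
  have Ax: "\<And>x. x \<in> carrier X \<Longrightarrow> A x \<in> carrier X"
    using A by (rule isometry_closed)
  define d where "d = (INF x\<in>carrier X. (chs_dist X y (A x))\<^sup>2)"
  have bdd: "bdd_below ((\<lambda>x. (chs_dist X y (A x))\<^sup>2) ` carrier X)"
    by (rule bdd_belowI2[of _ 0]) simp
  have d_le: "d \<le> (chs_dist X y (A x))\<^sup>2" if "x \<in> carrier X" for x
    unfolding d_def using bdd that by (rule cINF_lower)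
  have "\<exists>x\<in>carrier X. (chs_dist X y (A x))\<^sup>2 < d + 1 / Suc n" for n
    unfolding d_def by (rule cINF_less_iff[OF _ bdd, THEN iffD1]) auto
  then obtain xs where xs: "\<And>n. xs n \<in> carrier X"
    and xs_lt: "\<And>n. (chs_dist X y (A (xs n)))\<^sup>2 < d + 1 / Suc n"
    by metis
  have "(chs_dist X (xs m) (xs n))\<^sup>2 \<le> 2 / Suc m + 2 / Suc n" for m n
    using isometry_dist_le_excess[OF A y xs xs d_le, of m n] xs_lt[of m] xs_lt[of n] by linarith
  moreover have "(\<lambda>n. 2 / real (Suc n)) \<longlonglongrightarrow> 0"
    using LIMSEQ_Suc[OF lim_const_over_n[of 2]] by simp
  ultimately have "\<forall>e>0. \<exists>N. \<forall>m\<ge>N. \<forall>n\<ge>N. chs_dist X (xs m) (xs n) < e"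
    by (rule Cauchy_if_dist_bound[where b = "\<lambda>n. 2 / real (Suc n)"])
  then obtain z where z: "z \<in> carrier X" and lim: "(\<lambda>n. chs_dist X (xs n) z) \<longlonglongrightarrow> 0"
    using Cauchy_convergent[of xs] xs by blast
  have "chs_dist X y (A z) \<le> sqrt (d + 1 / Suc n) + chs_dist X (xs n) z" for n
  proof -
    have "chs_dist X y (A z) \<le> chs_dist X y (A (xs n)) + chs_dist X (A (xs n)) (A z)"
      using y xs z Ax by (intro chs_dist_triangle) auto
    moreover have "chs_dist X y (A (xs n)) \<le> sqrt (d + 1 / Suc n)"
      using xs_lt[of n] y xs Ax by (simp add: real_le_rsqrt less_imp_le)
    ultimately show ?thesis
      using isometry_dist[OF A xs z] by simp
  qed
  moreover have "(\<lambda>n. sqrt (d + 1 / Suc n) + chs_dist X (xs n) z) \<longlonglongrightarrow> sqrt (d + 0) + 0"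
    by (intro tendsto_intros lim LIMSEQ_Suc[OF lim_inverse_n'])
  ultimately have "chs_dist X y (A z) \<le> sqrt d"
    using LIMSEQ_le_const[of _ "sqrt d" "chs_dist X y (A z)"] by auto
  moreover have "sqrt d \<le> chs_dist X y (A x)" if "x \<in> carrier X" for x
    using d_le[OF that] y that Ax by (simp add: real_le_lsqrt)
  ultimately show ?thesis
    using that[OF z] order_trans by blast
qed

lemma isometry_adjoint_exists:
  assumes A: "isometry X X A" and y: "y \<in> carrier X"
  obtains z where "z \<in> carrier X" "\<And>x. x \<in> carrier X \<Longrightarrow> inner X z x = inner X y (A x)"
proof -
  have lin: "lin_op X X A"
    using A by (rule isometry_lin_op)
  obtain z where z: "z \<in> carrier X"
    and min: "\<And>x. x \<in> carrier X \<Longrightarrow> chs_dist X y (A z) \<le> chs_dist X y (A x)"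
    using isometry_range_best_approx[OF A y] by blast
  have "inner X (chs_sub X y (A z)) (A x) = 0" if "x \<in> carrier X" for x
  proof (rule best_approx_orthogonal[where M = "A ` carrier X"])
    show "u \<in> A ` carrier X \<Longrightarrow> v \<in> A ` carrier X \<Longrightarrow> add X u v \<in> A ` carrier X" for u v
      by (auto simp: lin_op_add[OF lin, symmetric])
    show "u \<in> A ` carrier X \<Longrightarrow> smult X c u \<in> A ` carrier X" for c u
      by (auto simp: lin_op_smult[OF lin, symmetric])
  qed (use A z min that y in \<open>auto intro: isometry_closed\<close>)
  then show ?thesis
    using that z y A by (simp add: isometry_closed isometry_cinner)
qed

lemma orth_proj_eq_self:
  assumes M: "M \<subseteq> carrier X" "\<And>u w. u \<in> M \<Longrightarrow> w \<in> M \<Longrightarrow> chs_sub X u w \<in> M"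
    and v: "v \<in> M"
  shows "orth_proj X M v = v"
  unfolding orth_proj_def
proof (rule the_equality)
  show "v \<in> M \<and> (\<forall>m\<in>M. inner X (chs_sub X v v) m = 0)"
    using M(1) v by (auto simp: subset_iff)
next
  fix w
  assume w: "w \<in> M \<and> (\<forall>m\<in>M. inner X (chs_sub X v w) m = 0)"
  have vw: "v \<in> carrier X" "w \<in> carrier X"
    using M(1) v w by auto
  have "inner X (chs_sub X v w) (chs_sub X v w) = 0"
    using w M(2)[OF v] by blast
  then have "chs_sub X v w = zero X"
    using vw by (intro cinner_self_eq_zeroD) auto
  then have "inner X v z = inner X w z" if "z \<in> carrier X" for z
    using cinner_diff_left[OF vw that] that by simp
  then show "w = v"
    using vw by (intro chs_eqI) auto
qed

lemma chs_dist_smult: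
  "u \<in> carrier X \<Longrightarrow> v \<in> carrier X \<Longrightarrow> chs_dist X (smult X c u) (smult X c v) = cmod c * chs_dist X u v"
proof -
  assume uv: "u \<in> carrier X" "v \<in> carrier X"
  have "chs_sub X (smult X c u) (smult X c v) = smult X c (chs_sub X u v)"
    by (rule chs_eqI) (use uv in \<open>auto simp: algebra_simps\<close>)
  then show ?thesis
    using uv by (simp add: chs_dist_def chs_norm_smult)
qed

lemma chs_dist_smult_self: "v \<in> carrier X \<Longrightarrow> chs_dist X (smult X c v) v = cmod (c - 1) * chs_norm X v"
proof -
  assume v: "v \<in> carrier X"
  have "chs_sub X (smult X c v) v = smult X (c - 1) v"
    by (rule chs_eqI) (use v in \<open>auto simp: algebra_simps\<close>)
  then show ?thesis
    using v by (simp add: chs_dist_def chs_norm_smult)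
qed

lemma isometry_group_tendsto_0_twisted:
  fixes G :: "real \<Rightarrow> 'v \<Rightarrow> 'v"
  assumes A: "isometry X X A" and G: "\<And>h. isometry X X (G h)"
    and twist: "\<And>h. G h (A v) = smult X (cis (h * k)) (A (G h v))"
    and v: "v \<in> carrier X" and lim: "((\<lambda>h. chs_dist X (G h v) v) \<longlongrightarrow> 0) (at 0)"
  shows "((\<lambda>h. chs_dist X (G h (A v)) (A v)) \<longlongrightarrow> 0) (at 0)"
proof (rule Lim_null_comparison)
  have Gv: "G h v \<in> carrier X" for h
    using G v by (rule isometry_closed)
  have Av: "A u \<in> carrier X" if "u \<in> carrier X" for u
    using A that by (rule isometry_closed)
  have "chs_dist X (G h (A v)) (A v) \<le> chs_dist X (G h v) v + cmod (cis (h * k) - 1) * chs_norm X v" for h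
  proof -
    have "chs_dist X (G h (A v)) (A v) \<le>
        chs_dist X (smult X (cis (h * k)) (A (G h v))) (smult X (cis (h * k)) (A v))
        + chs_dist X (smult X (cis (h * k)) (A v)) (A v)"
      unfolding twist by (rule chs_dist_triangle) (use Av Gv v in auto)
    also have "\<dots> = chs_dist X (G h v) v + cmod (cis (h * k) - 1) * chs_norm X v"
      using Av Gv v by (simp add: chs_dist_smult chs_dist_smult_self isometry_dist[OF A] isometry_norm[OF A])
    finally show ?thesis .
  qed
  moreover have "G h (A v) \<in> carrier X" for h
    using G Av[OF v] by (rule isometry_closed)
  ultimately show "\<forall>\<^sub>F h in at 0. norm (chs_dist X (G h (A v)) (A v))
      \<le> chs_dist X (G h v) v + cmod (cis (h * k) - 1) * chs_norm X v"
    using Av v by (intro always_eventually allI) simp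
  have "((\<lambda>h. cmod (cis (h * k) - 1) * chs_norm X v) \<longlongrightarrow> cmod (cis (0 * k) - 1) * chs_norm X v) (at 0)"
    unfolding cis_conv_exp by (intro tendsto_intros)
  then have "((\<lambda>h. cmod (cis (h * k) - 1) * chs_norm X v) \<longlongrightarrow> 0) (at 0)"
    by simp
  from tendsto_add[OF lim this]
  show "((\<lambda>h. chs_dist X (G h v) v + cmod (cis (h * k) - 1) * chs_norm X v) \<longlongrightarrow> 0) (at 0)"
    by (simp only: add_0_left)
qed

lemma isometry_group_tendsto_0_if_dense:
  fixes G :: "real \<Rightarrow> 'v \<Rightarrow> 'v"
  assumes G: "\<And>h. isometry X X (G h)" and f: "f \<in> carrier X"
    and dense: "\<And>e. e > 0 \<Longrightarrow>
      \<exists>\<xi>\<in>carrier X. chs_dist X f \<xi> < e \<and> ((\<lambda>h. chs_dist X (G h \<xi>) \<xi>) \<longlongrightarrow> 0) (at 0)"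
  shows "((\<lambda>h. chs_dist X (G h f) f) \<longlongrightarrow> 0) (at 0)"
proof (rule tendstoI)
  fix e :: real
  assume "e > 0"
  then obtain \<xi> where \<xi>: "\<xi> \<in> carrier X" "chs_dist X f \<xi> < e / 3"
    and lim: "((\<lambda>h. chs_dist X (G h \<xi>) \<xi>) \<longlongrightarrow> 0) (at 0)"
    using dense[of "e / 3"] by auto
  have "\<forall>\<^sub>F h in at 0. dist (chs_dist X (G h \<xi>) \<xi>) 0 < e / 3"
    using lim \<open>e > 0\<close> by (intro tendstoD) auto
  then show "\<forall>\<^sub>F h in at 0. dist (chs_dist X (G h f) f) 0 < e"
  proof eventually_elim
    case (elim h)
    have Gc: "G h f \<in> carrier X" "G h \<xi> \<in> carrier X"
      using G f \<xi> by (auto intro: isometry_closed)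
    have "chs_dist X (G h f) f \<le> chs_dist X (G h f) (G h \<xi>) + chs_dist X (G h \<xi>) \<xi> + chs_dist X \<xi> f"
      using chs_dist_triangle[of "G h f" "G h \<xi>" f] chs_dist_triangle[of "G h \<xi>" \<xi> f] Gc f \<xi>
      by linarith
    also have "chs_dist X (G h f) (G h \<xi>) = chs_dist X f \<xi>"
      using G f \<xi>(1) by (rule isometry_dist)
    finally show ?case
      using elim Gc f \<xi> chs_dist_commute[of \<xi> f] by (simp add: dist_real_def)
  qed
qed

lemma isometry_group_tendsto_if_tendsto_0:
  fixes G :: "real \<Rightarrow> 'v \<Rightarrow> 'v"
  assumes G: "\<And>h. isometry X X (G h)" and G_add: "\<And>s t x. x \<in> carrier X \<Longrightarrow> G (s + t) x = G s (G t x)"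
    and f: "f \<in> carrier X" and lim: "((\<lambda>h. chs_dist X (G h f) f) \<longlongrightarrow> 0) (at 0)"
  shows "((\<lambda>s. chs_dist X (G s f) (G t f)) \<longlongrightarrow> 0) (at t)"
proof -
  have "chs_dist X (G (t + h) f) (G t f) = chs_dist X (G h f) f" for h
    using G_add[OF f, of t h] isometry_dist[OF G isometry_closed[OF G f] f] by simp
  with lim have "((\<lambda>h. chs_dist X (G (t + h) f) (G t f)) \<longlongrightarrow> 0) (at 0)"
    by simp
  then show ?thesis
    using LIM_offset_zero_cancel[of "\<lambda>s. chs_dist X (G s f) (G t f)" t] by simp
qed

end

lemma unitary_if_isometry_group:
  fixes G :: "real \<Rightarrow> 'v \<Rightarrow> 'v"
  assumes G: "\<And>t. isometry X X (G t)" and G_0: "\<And>x. x \<in> carrier X \<Longrightarrow> G 0 x = x"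
    and G_add: "\<And>s t x. x \<in> carrier X \<Longrightarrow> G (s + t) x = G s (G t x)"
  shows "unitary X (G t)"
  unfolding unitary_def
proof (intro conjI G equalityI subsetI)
  show "y \<in> carrier X" if "y \<in> G t ` carrier X" for y
    using that isometry_closed[OF G] by blast
  show "y \<in> G t ` carrier X" if "y \<in> carrier X" for y
  proof
    show "y = G t (G (- t) y)"
      using G_0 G_add[where s = t and t = "- t" and x = y] that by simp
  qed (rule isometry_closed[OF G that])
qed

section \<open>The inductive limit of a Weyl pair of isometric semigroups\<close>

lemma sc_isometry_semigroup_isometry: "sc_isometry_semigroup H P \<Longrightarrow> 0 \<le> t \<Longrightarrow> isometry H H (P t)"
  by (simp add: sc_isometry_semigroup_def)

lemma sc_isometry_semigroup_0: "sc_isometry_semigroup H P \<Longrightarrow> x \<in> carrier H \<Longrightarrow> P 0 x = x"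
  by (simp add: sc_isometry_semigroup_def)

lemma sc_isometry_semigroup_add:
  "sc_isometry_semigroup H P \<Longrightarrow> 0 \<le> s \<Longrightarrow> 0 \<le> t \<Longrightarrow> x \<in> carrier H \<Longrightarrow> P (s + t) x = P s (P t x)"
  by (simp add: sc_isometry_semigroup_def)

lemma sc_isometry_semigroup_tendsto_0:
  "sc_isometry_semigroup H P \<Longrightarrow> x \<in> carrier H \<Longrightarrow>
    ((\<lambda>s. chs_dist H (P s x) x) \<longlongrightarrow> 0) (at 0 within {0..})"
proof -
  assume P: "sc_isometry_semigroup H P" and x: "x \<in> carrier H"
  then have "((\<lambda>s. chs_dist H (P s x) (P 0 x)) \<longlongrightarrow> 0) (at 0 within {0..})"
    unfolding sc_isometry_semigroup_def by blast
  then show ?thesis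
    using sc_isometry_semigroup_0[OF P x] by simp
qed

lemma eventually_ge_corner: "\<forall>\<^sub>F q in at_top \<times>\<^sub>F at_top. (a :: real) \<le> fst q \<and> (b :: real) \<le> snd q"
  unfolding eventually_prod_filter
  by (intro exI[of _ "\<lambda>x. a \<le> x"] exI[of _ "\<lambda>y. b \<le> y"]) (simp add: eventually_ge_at_top)

lemma filterlim_shift_corner:
  fixes a b :: real
  shows "filterlim (\<lambda>q. (fst q + a, snd q + b)) (at_top \<times>\<^sub>F at_top) (at_top \<times>\<^sub>F at_top :: (real \<times> real) filter)"
proof (rule filterlim_Pair)
  show "filterlim (\<lambda>q. fst q + a) at_top (at_top \<times>\<^sub>F at_top :: (real \<times> real) filter)"
    "filterlim (\<lambda>q. snd q + b) at_top (at_top \<times>\<^sub>F at_top :: (real \<times> real) filter)"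
    unfolding filterlim_at_top
  proof (safe)
    fix Z :: real
    show "\<forall>\<^sub>F q in (at_top \<times>\<^sub>F at_top :: (real \<times> real) filter). Z \<le> fst q + a"
      using eventually_ge_corner[of "Z - a" 0] by (rule eventually_mono) simp
    show "\<forall>\<^sub>F q in (at_top \<times>\<^sub>F at_top :: (real \<times> real) filter). Z \<le> snd q + b"
      using eventually_ge_corner[of 0 "Z - b"] by (rule eventually_mono) simp
  qed
qed

locale weyl_pair = complex_hilbert H for H :: "'a chs" +
  fixes S T :: "real \<Rightarrow> 'a \<Rightarrow> 'a"
  assumes S: "sc_isometry_semigroup H S" and T: "sc_isometry_semigroup H T"
    and weyl: "\<forall>l\<ge>0. \<forall>m\<ge>0. \<forall>x\<in>carrier H.
      S l (T m x) = smult H (exp (\<i> * complex_of_real (l * m))) (T m (S l x))"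
begin

lemma S_closed [simp, intro]: "0 \<le> t \<Longrightarrow> x \<in> carrier H \<Longrightarrow> S t x \<in> carrier H"
  by (rule isometry_closed[OF sc_isometry_semigroup_isometry[OF S]])

lemma T_closed [simp, intro]: "0 \<le> t \<Longrightarrow> x \<in> carrier H \<Longrightarrow> T t x \<in> carrier H"
  by (rule isometry_closed[OF sc_isometry_semigroup_isometry[OF T]])

lemma T_S_weyl:
  assumes "0 \<le> l" "0 \<le> m" "x \<in> carrier H"
  shows "T m (S l x) = smult H (cis (- (l * m))) (S l (T m x))"
proof -
  have "S l (T m x) = smult H (cis (l * m)) (T m (S l x))"
    using weyl assms by (simp add: cis_conv_exp)
  then show ?thesis
    using assms by (simp add: cis_mult)
qed

definition W :: "real \<Rightarrow> real \<Rightarrow> 'a \<Rightarrow> 'a" where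
  "W a b x = S a (T b x)"

lemma W_isometry: "0 \<le> a \<Longrightarrow> 0 \<le> b \<Longrightarrow> isometry H H (W a b)"
  using isometry_comp[OF sc_isometry_semigroup_isometry[OF T] sc_isometry_semigroup_isometry[OF S]]
  by (simp add: W_def[abs_def])

lemma W_closed [simp, intro]: "0 \<le> a \<Longrightarrow> 0 \<le> b \<Longrightarrow> x \<in> carrier H \<Longrightarrow> W a b x \<in> carrier H"
  by (simp add: W_def)

lemma W_0_0 [simp]: "x \<in> carrier H \<Longrightarrow> W 0 0 x = x"
  using S T by (simp add: W_def sc_isometry_semigroup_0)

lemma W_mult:
  assumes "0 \<le> a" "0 \<le> b" "0 \<le> c" "0 \<le> e" "x \<in> carrier H"
  shows "W a b (W c e x) = smult H (cis (- (b * c))) (W (a + c) (b + e) x)"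
proof -
  have "W a b (W c e x) = S a (smult H (cis (- (c * b))) (S c (T b (T e x))))"
    using assms by (simp add: W_def T_S_weyl)
  also have "\<dots> = smult H (cis (- (b * c))) (S (a + c) (T (b + e) x))"
    using assms S T by (simp add: lin_op_smult[OF isometry_lin_op[OF sc_isometry_semigroup_isometry[OF S]]]
        sc_isometry_semigroup_add mult.commute)
  finally show ?thesis
    by (simp add: W_def)
qed

text \<open>Coherence is stated through inner products because the adjoints \<open>W(c, e)\<^sup>*\<close> are not
  given as operators.\<close>

definition coherent :: "(real \<times> real \<Rightarrow> 'a) \<Rightarrow> bool" where
  "coherent f \<longleftrightarrow> (\<forall>a b c e x. 0 \<le> c \<longrightarrow> 0 \<le> e \<longrightarrow> x \<in> carrier H \<longrightarrow>
      inner H (f (a, b)) x = cis (- (a * e)) * inner H (f (a + c, b + e)) (W c e x))"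

definition bounded_coherent :: "(real \<times> real \<Rightarrow> 'a) set" where
  "bounded_coherent = {f. (\<forall>q. f q \<in> carrier H) \<and> coherent f \<and> (\<exists>B. \<forall>q. chs_norm H (f q) \<le> B)}"

lemma bounded_coherentI:
  assumes "\<And>q. f q \<in> carrier H" "coherent f" "\<And>q. chs_norm H (f q) \<le> B"
  shows "f \<in> bounded_coherent"
  using assms unfolding bounded_coherent_def by blast

lemma bounded_coherent_closed [simp, intro]: "f \<in> bounded_coherent \<Longrightarrow> f q \<in> carrier H"
  unfolding bounded_coherent_def by blast

lemma bounded_coherentD:
  "f \<in> bounded_coherent \<Longrightarrow> 0 \<le> c \<Longrightarrow> 0 \<le> e \<Longrightarrow> x \<in> carrier H \<Longrightarrow>
    inner H (f (a, b)) x = cis (- (a * e)) * inner H (f (a + c, b + e)) (W c e x)"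
  unfolding bounded_coherent_def coherent_def by blast

lemma bounded_coherent_bound:
  assumes "f \<in> bounded_coherent"
  obtains B where "\<And>q. chs_norm H (f q) \<le> B"
  using assms unfolding bounded_coherent_def by blast

lemma bounded_coherent_norm_mono:
  assumes f: "f \<in> bounded_coherent" and le: "fst q \<le> fst q'" "snd q \<le> snd q'"
  shows "chs_norm H (f q) \<le> chs_norm H (f q')"
proof -
  obtain a b where q: "q = (a, b)"
    by fastforce
  define c e where "c = fst q' - a" and "e = snd q' - b"
  have ce: "0 \<le> c" "0 \<le> e" and q': "q' = (a + c, b + e)"
    using le by (auto simp: q c_def e_def)
  show ?thesis
    unfolding q q'
    by (rule chs_norm_le_if_cinner_isometry[OF W_isometry[OF ce], where c = "cis (- (a * e))"])
      (use bounded_coherentD[OF f ce, where x = "f (a, b)" and a = a and b = b] f in simp_all)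
qed

lemma bounded_coherent_bdd_norm2:
  assumes "f \<in> bounded_coherent"
  shows "bdd_above (range (\<lambda>q. (chs_norm H (f q))\<^sup>2))"
proof -
  obtain B where "\<And>q. chs_norm H (f q) \<le> B"
    using bounded_coherent_bound[OF assms] by blast
  then show ?thesis
    using assms by (intro bdd_aboveI2[where M = "B\<^sup>2"]) (simp add: power_mono)
qed

lemma bounded_coherent_norm_tendsto:
  assumes f: "f \<in> bounded_coherent"
  shows "((\<lambda>q. (chs_norm H (f q))\<^sup>2) \<longlongrightarrow> (SUP q. (chs_norm H (f q))\<^sup>2)) (at_top \<times>\<^sub>F at_top)"
proof (rule increasing_tendsto)
  note bdd = bounded_coherent_bdd_norm2[OF f]
  show "\<forall>\<^sub>F q in at_top \<times>\<^sub>F at_top. (chs_norm H (f q))\<^sup>2 \<le> (SUP q. (chs_norm H (f q))\<^sup>2)"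
    using bdd by (intro always_eventually allI cSUP_upper) auto
  fix y
  assume "y < (SUP q. (chs_norm H (f q))\<^sup>2)"
  then obtain q0 where q0: "y < (chs_norm H (f q0))\<^sup>2"
    using less_cSUP_iff[OF _ bdd] by auto
  show "\<forall>\<^sub>F q in at_top \<times>\<^sub>F at_top. y < (chs_norm H (f q))\<^sup>2"
    using eventually_ge_corner[of "fst q0" "snd q0"]
  proof eventually_elim
    case (elim q)
    then have "chs_norm H (f q0) \<le> chs_norm H (f q)"
      by (intro bounded_coherent_norm_mono[OF f]) auto
    then have "(chs_norm H (f q0))\<^sup>2 \<le> (chs_norm H (f q))\<^sup>2"
      using f by (intro power_mono) auto
    with q0 show ?case
      by linarith
  qed
qed

lemma bounded_coherent_add:
  assumes f: "f \<in> bounded_coherent" and g: "g \<in> bounded_coherent"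
  shows "(\<lambda>q. add H (f q) (g q)) \<in> bounded_coherent"
proof -
  obtain B1 B2 where B: "\<And>q. chs_norm H (f q) \<le> B1" "\<And>q. chs_norm H (g q) \<le> B2"
    using bounded_coherent_bound f g by metis
  show ?thesis
  proof (rule bounded_coherentI)
    show "coherent (\<lambda>q. add H (f q) (g q))"
      unfolding coherent_def
    proof (intro allI impI)
      fix a b c e :: real and x
      assume ce: "0 \<le> c" "0 \<le> e" and x: "x \<in> carrier H"
      show "inner H (add H (f (a, b)) (g (a, b))) x =
          cis (- (a * e)) * inner H (add H (f (a + c, b + e)) (g (a + c, b + e))) (W c e x)"
        using bounded_coherentD[OF f ce x, of a b] bounded_coherentD[OF g ce x, of a b] f g ce x
        by (simp add: distrib_left)
    qed
    show "chs_norm H (add H (f q) (g q)) \<le> B1 + B2" for q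
      using chs_norm_triangle[of "f q" "g q"] B[of q] f g by simp
  qed (use f g in simp)
qed

lemma bounded_coherent_smult:
  assumes f: "f \<in> bounded_coherent"
  shows "(\<lambda>q. smult H c (f q)) \<in> bounded_coherent"
proof -
  obtain B where B: "\<And>q. chs_norm H (f q) \<le> B"
    using bounded_coherent_bound f by metis
  show ?thesis
  proof (rule bounded_coherentI)
    show "coherent (\<lambda>q. smult H c (f q))"
      unfolding coherent_def
    proof (intro allI impI)
      fix a b c' e :: real and x
      assume ce: "0 \<le> c'" "0 \<le> e" and x: "x \<in> carrier H"
      show "inner H (smult H c (f (a, b))) x =
          cis (- (a * e)) * inner H (smult H c (f (a + c', b + e))) (W c' e x)"
        using bounded_coherentD[OF f ce x, of a b] f ce x by (simp add: mult.left_commute)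
    qed
    show "chs_norm H (smult H c (f q)) \<le> cmod c * B" for q
      using B[of q] f by (simp add: chs_norm_smult mult_left_mono)
  qed (use f in simp)
qed

lemma bounded_coherent_zero: "(\<lambda>q. zero H) \<in> bounded_coherent"
  by (rule bounded_coherentI[where B = 0]) (simp_all add: coherent_def)

definition dilation_inner :: "(real \<times> real \<Rightarrow> 'a) \<Rightarrow> (real \<times> real \<Rightarrow> 'a) \<Rightarrow> complex" where
  "dilation_inner f g = Lim (at_top \<times>\<^sub>F at_top) (\<lambda>q. inner H (f q) (g q))"

lemma dilation_inner_eqI: "((\<lambda>q. inner H (f q) (g q)) \<longlongrightarrow> z) (at_top \<times>\<^sub>F at_top) \<Longrightarrow> dilation_inner f g = z"
  unfolding dilation_inner_def by (rule tendsto_Lim) (simp add: prod_filter_eq_bot)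

lemma bounded_coherent_cinner_tendsto:
  assumes f: "f \<in> bounded_coherent" and g: "g \<in> bounded_coherent"
  shows "((\<lambda>q. inner H (f q) (g q)) \<longlongrightarrow> dilation_inner f g) (at_top \<times>\<^sub>F at_top)"
proof -
  define N where "N c q = complex_of_real ((chs_norm H (add H (f q) (smult H c (g q))))\<^sup>2)" for c q
  define L where "L c = complex_of_real (SUP q. (chs_norm H (add H (f q) (smult H c (g q))))\<^sup>2)" for c
  have "(N c \<longlongrightarrow> L c) (at_top \<times>\<^sub>F at_top)" for c
    unfolding N_def L_def
    by (intro tendsto_of_real bounded_coherent_norm_tendsto bounded_coherent_add bounded_coherent_smult f g)
  then have "((\<lambda>q. (N 1 q - N (-1) q + \<i> * N \<i> q - \<i> * N (-\<i>) q) / 4) \<longlongrightarrow>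
      (L 1 - L (-1) + \<i> * L \<i> - \<i> * L (-\<i>)) / 4) (at_top \<times>\<^sub>F at_top)"
    by (intro tendsto_intros) auto
  moreover have "(\<lambda>q. inner H (f q) (g q)) = (\<lambda>q. (N 1 q - N (-1) q + \<i> * N \<i> q - \<i> * N (-\<i>) q) / 4)"
    using f g unfolding N_def by (intro ext cinner_polarization) auto
  ultimately have lim: "((\<lambda>q. inner H (f q) (g q)) \<longlongrightarrow> (L 1 - L (-1) + \<i> * L \<i> - \<i> * L (-\<i>)) / 4)
      (at_top \<times>\<^sub>F at_top)"
    by simp
  moreover from lim have "dilation_inner f g = (L 1 - L (-1) + \<i> * L \<i> - \<i> * L (-\<i>)) / 4"
    by (rule dilation_inner_eqI)
  ultimately show ?thesis
    by (simp only:)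
qed

lemma bounded_coherent_diff:
  "f \<in> bounded_coherent \<Longrightarrow> g \<in> bounded_coherent \<Longrightarrow> (\<lambda>q. chs_sub H (f q) (g q)) \<in> bounded_coherent"
  unfolding chs_sub_def by (intro bounded_coherent_add bounded_coherent_smult)

lemma dilation_inner_self:
  assumes f: "f \<in> bounded_coherent"
  shows "dilation_inner f f = complex_of_real (SUP q. (chs_norm H (f q))\<^sup>2)"
proof (rule dilation_inner_eqI)
  show "((\<lambda>q. inner H (f q) (f q)) \<longlongrightarrow> complex_of_real (SUP q. (chs_norm H (f q))\<^sup>2)) (at_top \<times>\<^sub>F at_top)"
    using tendsto_of_real[OF bounded_coherent_norm_tendsto[OF f]] f by (simp add: cinner_self)
qed

lemma dilation_inner_add_left:
  assumes "f \<in> bounded_coherent" "g \<in> bounded_coherent" "h \<in> bounded_coherent"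
  shows "dilation_inner (\<lambda>q. add H (f q) (g q)) h = dilation_inner f h + dilation_inner g h"
  using tendsto_add[OF bounded_coherent_cinner_tendsto bounded_coherent_cinner_tendsto] assms
  by (intro dilation_inner_eqI) simp

lemma dilation_inner_smult_left:
  assumes "f \<in> bounded_coherent" "g \<in> bounded_coherent"
  shows "dilation_inner (\<lambda>q. smult H c (f q)) g = c * dilation_inner f g"
  using tendsto_mult[OF tendsto_const bounded_coherent_cinner_tendsto] assms
  by (intro dilation_inner_eqI) simp

lemma dilation_inner_commute:
  assumes "f \<in> bounded_coherent" "g \<in> bounded_coherent"
  shows "dilation_inner f g = cnj (dilation_inner g f)"
  using tendsto_cnj[OF bounded_coherent_cinner_tendsto[OF assms(2,1)]] assms
  by (intro dilation_inner_eqI) (simp add: cinner_commute[of "f _"])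

definition dilation_space :: "(real \<times> real \<Rightarrow> 'a) chs" where
  "dilation_space = \<lparr>carrier = bounded_coherent, zero = (\<lambda>q. zero H),
     add = (\<lambda>f g q. add H (f q) (g q)), smult = (\<lambda>c f q. smult H c (f q)), inner = dilation_inner\<rparr>"

lemma dilation_space_simps [simp]:
  "carrier dilation_space = bounded_coherent"
  "zero dilation_space = (\<lambda>q. zero H)"
  "add dilation_space f g = (\<lambda>q. add H (f q) (g q))"
  "smult dilation_space c f = (\<lambda>q. smult H c (f q))"
  "inner dilation_space f g = dilation_inner f g"
  by (simp_all add: dilation_space_def)

lemma chs_sub_dilation_space: "chs_sub dilation_space f g = (\<lambda>q. chs_sub H (f q) (g q))"
  by (simp add: chs_sub_def)

lemma chs_norm_dilation_space:
  "f \<in> bounded_coherent \<Longrightarrow> chs_norm dilation_space f = sqrt (SUP q. (chs_norm H (f q))\<^sup>2)"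
  by (simp add: chs_norm_def dilation_inner_self)

lemma chs_norm_le_dilation_norm:
  assumes "f \<in> bounded_coherent"
  shows "chs_norm H (f q) \<le> chs_norm dilation_space f"
proof -
  have "(chs_norm H (f q))\<^sup>2 \<le> (SUP q. (chs_norm H (f q))\<^sup>2)"
    by (rule cSUP_upper[OF UNIV_I bounded_coherent_bdd_norm2[OF assms]])
  then show ?thesis
    using assms by (simp add: chs_norm_dilation_space real_le_rsqrt)
qed

lemma dilation_norm_le:
  assumes "f \<in> bounded_coherent" "0 \<le> r" "\<And>q. chs_norm H (f q) \<le> r"
  shows "chs_norm dilation_space f \<le> r"
proof -
  have "(SUP q. (chs_norm H (f q))\<^sup>2) \<le> r\<^sup>2"
    using assms by (intro cSUP_least) (auto intro: power_mono)
  then show ?thesis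
    using assms by (simp add: chs_norm_dilation_space real_le_lsqrt)
qed

lemma chs_dist_le_dilation_dist:
  "f \<in> bounded_coherent \<Longrightarrow> g \<in> bounded_coherent \<Longrightarrow> chs_dist H (f q) (g q) \<le> chs_dist dilation_space f g"
  unfolding chs_dist_def chs_sub_dilation_space
  by (rule chs_norm_le_dilation_norm[OF bounded_coherent_diff])

lemma dilation_dist_le:
  "f \<in> bounded_coherent \<Longrightarrow> g \<in> bounded_coherent \<Longrightarrow> 0 \<le> r \<Longrightarrow> (\<And>q. chs_dist H (f q) (g q) \<le> r) \<Longrightarrow>
    chs_dist dilation_space f g \<le> r"
  unfolding chs_dist_def chs_sub_dilation_space
  by (rule dilation_norm_le[OF bounded_coherent_diff])

lemma coherent_pointwise_limit:
  assumes Y: "\<And>n. Y n \<in> bounded_coherent" and L: "\<And>q. L q \<in> carrier H"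
    and lim: "\<And>q. (\<lambda>n. chs_dist H (Y n q) (L q)) \<longlonglongrightarrow> 0"
  shows "coherent L"
  unfolding coherent_def
proof (intro allI impI)
  fix a b c e :: real and x
  assume ce: "0 \<le> c" "0 \<le> e" and x: "x \<in> carrier H"
  have "(\<lambda>n. inner H (Y n (a, b)) x) = (\<lambda>n. cis (- (a * e)) * inner H (Y n (a + c, b + e)) (W c e x))"
    using Y ce x by (intro ext bounded_coherentD)
  moreover have "(\<lambda>n. inner H (Y n (a, b)) x) \<longlonglongrightarrow> inner H (L (a, b)) x"
    using Y L x lim by (intro cinner_tendsto) auto
  ultimately have "(\<lambda>n. cis (- (a * e)) * inner H (Y n (a + c, b + e)) (W c e x)) \<longlonglongrightarrow> inner H (L (a, b)) x"
    by simp
  moreover have "(\<lambda>n. cis (- (a * e)) * inner H (Y n (a + c, b + e)) (W c e x)) \<longlonglongrightarrow>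
      cis (- (a * e)) * inner H (L (a + c, b + e)) (W c e x)"
    using Y L x lim ce by (intro tendsto_mult tendsto_const cinner_tendsto) auto
  ultimately show "inner H (L (a, b)) x = cis (- (a * e)) * inner H (L (a + c, b + e)) (W c e x)"
    by (rule LIMSEQ_unique)
qed

lemma dilation_Cauchy_pointwise_limit:
  assumes Y: "\<And>n. Y n \<in> bounded_coherent"
    and Cauchy: "\<forall>e>0. \<exists>N. \<forall>m\<ge>N. \<forall>n\<ge>N. chs_dist dilation_space (Y m) (Y n) < e"
  obtains L where "\<And>q. L q \<in> carrier H" "\<And>q. (\<lambda>n. chs_dist H (Y n q) (L q)) \<longlonglongrightarrow> 0"
    "\<And>N n r q. \<forall>m\<ge>N. \<forall>k\<ge>N. chs_dist dilation_space (Y m) (Y k) < r \<Longrightarrow> n \<ge> N \<Longrightarrow>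
      chs_dist H (Y n q) (L q) \<le> r"
proof -
  have "\<exists>l. l \<in> carrier H \<and> (\<lambda>n. chs_dist H (Y n q) l) \<longlonglongrightarrow> 0" for q
  proof -
    have "\<exists>N. \<forall>m\<ge>N. \<forall>n\<ge>N. chs_dist H (Y m q) (Y n q) < e" if "e > 0" for e
    proof -
      obtain N where N: "\<forall>m\<ge>N. \<forall>n\<ge>N. chs_dist dilation_space (Y m) (Y n) < e"
        using Cauchy \<open>e > 0\<close> by blast
      have "chs_dist H (Y m q) (Y n q) < e" if "m \<ge> N" "n \<ge> N" for m n
        using chs_dist_le_dilation_dist[OF Y[of m] Y[of n], of q] N that by fastforce
      then show ?thesis
        by blast
    qed
    then show ?thesis
      using Cauchy_convergent[of "\<lambda>n. Y n q"] Y by blast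
  qed
  then have "\<forall>q. \<exists>l. l \<in> carrier H \<and> (\<lambda>n. chs_dist H (Y n q) l) \<longlonglongrightarrow> 0"
    by blast
  from choice[OF this] obtain L where "\<forall>q. L q \<in> carrier H \<and> (\<lambda>n. chs_dist H (Y n q) (L q)) \<longlonglongrightarrow> 0"
    by blast
  then have L: "\<And>q. L q \<in> carrier H" and lim: "\<And>q. (\<lambda>n. chs_dist H (Y n q) (L q)) \<longlonglongrightarrow> 0"
    by auto
  moreover have "chs_dist H (Y n q) (L q) \<le> r"
    if N: "\<forall>m\<ge>N. \<forall>k\<ge>N. chs_dist dilation_space (Y m) (Y k) < r" and n: "n \<ge> N" for N n r q
  proof -
    have bound: "chs_dist H (Y n q) (Y k q) \<le> r" if "k \<ge> N" for k
      using N n that chs_dist_le_dilation_dist[OF Y[of n] Y[of k], of q] by fastforce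
    have Yq: "Y k q \<in> carrier H" for k
      using Y by simp
    show ?thesis
      by (rule chs_dist_limit_le[OF Yq L Yq lim bound])
  qed
  ultimately show ?thesis
    using that by blast
qed

lemma dilation_space_complete:
  assumes Y: "\<And>n. Y n \<in> bounded_coherent"
    and Cauchy: "\<forall>e>0. \<exists>N. \<forall>m\<ge>N. \<forall>n\<ge>N. chs_dist dilation_space (Y m) (Y n) < e"
  shows "\<exists>L\<in>bounded_coherent. (\<lambda>n. chs_dist dilation_space (Y n) L) \<longlonglongrightarrow> 0"
proof -
  obtain L where L: "\<And>q. L q \<in> carrier H" and lim: "\<And>q. (\<lambda>n. chs_dist H (Y n q) (L q)) \<longlonglongrightarrow> 0"
    and uniform: "\<And>N n r q. \<forall>m\<ge>N. \<forall>k\<ge>N. chs_dist dilation_space (Y m) (Y k) < r \<Longrightarrow> n \<ge> N \<Longrightarrow>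
      chs_dist H (Y n q) (L q) \<le> r"
    by (rule dilation_Cauchy_pointwise_limit[OF Y Cauchy]) blast
  obtain N1 where N1: "\<forall>m\<ge>N1. \<forall>k\<ge>N1. chs_dist dilation_space (Y m) (Y k) < 1"
    using Cauchy[rule_format, of 1] by auto
  obtain B where B: "\<And>q. chs_norm H (Y N1 q) \<le> B"
    using bounded_coherent_bound[OF Y] by blast
  have "chs_norm H (L q) \<le> B + 1" for q
    using chs_norm_le_add_dist[OF L, of "Y N1 q" q] uniform[OF N1 order_refl, of q]
      chs_dist_commute[OF L, of "Y N1 q" q] B[of q] Y by simp
  then have LK: "L \<in> bounded_coherent"
    using L coherent_pointwise_limit[OF Y L lim] by (intro bounded_coherentI)
  have "(\<lambda>n. chs_dist dilation_space (Y n) L) \<longlonglongrightarrow> 0"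
  proof (rule LIMSEQ_I)
    fix r :: real
    assume "r > 0"
    then obtain N where N: "\<forall>m\<ge>N. \<forall>k\<ge>N. chs_dist dilation_space (Y m) (Y k) < r / 2"
      using Cauchy[rule_format, of "r / 2"] by auto
    have "norm (chs_dist dilation_space (Y n) L - 0) < r" if "n \<ge> N" for n
    proof -
      have "chs_dist dilation_space (Y n) L \<le> r / 2"
        using \<open>r > 0\<close> uniform[OF N that] by (intro dilation_dist_le[OF Y LK]) auto
      moreover have "0 \<le> chs_dist dilation_space (Y n) L"
        using order_trans[OF chs_dist_nonneg[OF bounded_coherent_closed[OF Y[of n]] L]
            chs_dist_le_dilation_dist[OF Y[of n] LK]] .
      ultimately show ?thesis
        using \<open>r > 0\<close> by simp
    qed
    then show "\<exists>N. \<forall>n\<ge>N. norm (chs_dist dilation_space (Y n) L - 0) < r"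
      by blast
  qed
  with LK show ?thesis
    by blast
qed

lemma dilation_inner_self_nonneg:
  assumes "f \<in> bounded_coherent"
  shows "0 \<le> Re (dilation_inner f f)"
proof -
  have "(chs_norm H (f (0, 0)))\<^sup>2 \<le> (SUP q. (chs_norm H (f q))\<^sup>2)"
    by (rule cSUP_upper[OF UNIV_I bounded_coherent_bdd_norm2[OF assms]])
  then show ?thesis
    using assms order_trans[OF zero_le_power2] by (simp add: dilation_inner_self)
qed

lemma dilation_inner_self_eq_zeroD:
  assumes f: "f \<in> bounded_coherent" and zero: "dilation_inner f f = 0"
  shows "f = (\<lambda>q. zero H)"
proof
  fix q
  have "(chs_norm H (f q))\<^sup>2 \<le> 0"
    using zero cSUP_upper[OF UNIV_I bounded_coherent_bdd_norm2[OF f], of q] f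
    by (simp add: dilation_inner_self)
  then show "f q = zero H"
    using f by (simp add: chs_norm_eq_zero_iff[symmetric])
qed

lemma complex_hilbert_dilation_space: "complex_hilbert dilation_space"
proof (rule complex_hilbert.intro)
  show "zero dilation_space \<in> carrier dilation_space"
    by (simp add: bounded_coherent_zero)
  show "add dilation_space f g \<in> carrier dilation_space"
    if "f \<in> carrier dilation_space" "g \<in> carrier dilation_space" for f g
    using that by (simp add: bounded_coherent_add)
  show "smult dilation_space c f \<in> carrier dilation_space" if "f \<in> carrier dilation_space" for c f
    using that by (simp add: bounded_coherent_smult)
  show "add dilation_space (add dilation_space f g) h = add dilation_space f (add dilation_space g h)"
    if "f \<in> carrier dilation_space" "g \<in> carrier dilation_space" "h \<in> carrier dilation_space" for f g h
    using that by (simp add: chs_add_assoc)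
  show "add dilation_space f g = add dilation_space g f"
    if "f \<in> carrier dilation_space" "g \<in> carrier dilation_space" for f g
    using that by (simp add: fun_eq_iff chs_add_commute)
  show "add dilation_space (zero dilation_space) f = f" if "f \<in> carrier dilation_space" for f
    using that by simp
  show "\<exists>g\<in>carrier dilation_space. add dilation_space f g = zero dilation_space"
    if "f \<in> carrier dilation_space" for f
  proof
    show "(\<lambda>q. smult H (-1) (f q)) \<in> carrier dilation_space"
      using that by (simp add: bounded_coherent_smult)
    show "add dilation_space f (\<lambda>q. smult H (-1) (f q)) = zero dilation_space"
      using that by (simp add: chs_sub_def[symmetric])
  qed
  show "smult dilation_space c (add dilation_space f g) =
      add dilation_space (smult dilation_space c f) (smult dilation_space c g)"
    if "f \<in> carrier dilation_space" "g \<in> carrier dilation_space" for c f g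
    using that by (simp add: chs_smult_add_right)
  show "smult dilation_space (c + c') f = add dilation_space (smult dilation_space c f) (smult dilation_space c' f)"
    if "f \<in> carrier dilation_space" for c c' f
    using that by (simp add: chs_smult_add_left)
  show "smult dilation_space (c * c') f = smult dilation_space c (smult dilation_space c' f)"
    if "f \<in> carrier dilation_space" for c c' f
    using that by simp
  show "smult dilation_space 1 f = f" if "f \<in> carrier dilation_space" for f
    using that by simp
  show "inner dilation_space (add dilation_space f g) h = inner dilation_space f h + inner dilation_space g h"
    if "f \<in> carrier dilation_space" "g \<in> carrier dilation_space" "h \<in> carrier dilation_space" for f g h
    using that by (simp add: dilation_inner_add_left)
  show "inner dilation_space (smult dilation_space c f) g = c * inner dilation_space f g"
    if "f \<in> carrier dilation_space" "g \<in> carrier dilation_space" for c f g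
    using that by (simp add: dilation_inner_smult_left)
  show "inner dilation_space f g = cnj (inner dilation_space g f)"
    if "f \<in> carrier dilation_space" "g \<in> carrier dilation_space" for f g
    using that by (simp add: dilation_inner_commute[of f g])
  show "0 \<le> Re (inner dilation_space f f)" if "f \<in> carrier dilation_space" for f
    using that by (simp add: dilation_inner_self_nonneg)
  show "f = zero dilation_space" if "f \<in> carrier dilation_space" "inner dilation_space f f = 0" for f
    using that by (simp add: dilation_inner_self_eq_zeroD)
  show "\<exists>L\<in>carrier dilation_space. (\<lambda>n. chs_dist dilation_space (Y n) L) \<longlonglongrightarrow> 0"
    if "\<And>n. Y n \<in> carrier dilation_space"
      and "\<forall>e>0. \<exists>N. \<forall>m\<ge>N. \<forall>n\<ge>N. chs_dist dilation_space (Y m) (Y n) < e" for Y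
  proof -
    have "\<And>n. Y n \<in> bounded_coherent"
      using that(1) by simp
    from dilation_space_complete[OF this that(2)] show ?thesis
      by simp
  qed
qed

section \<open>The unitary groups and the embedding\<close>

definition U :: "real \<Rightarrow> (real \<times> real \<Rightarrow> 'a) \<Rightarrow> real \<times> real \<Rightarrow> 'a" where
  "U l f q = smult H (cis (- (l * snd q))) (f (fst q + l, snd q))"

definition V :: "real \<Rightarrow> (real \<times> real \<Rightarrow> 'a) \<Rightarrow> real \<times> real \<Rightarrow> 'a" where
  "V m f q = f (fst q, snd q + m)"

lemma U_apply [simp]: "U l f (a, b) = smult H (cis (- (l * b))) (f (a + l, b))"
  by (simp add: U_def)

lemma V_apply [simp]: "V m f (a, b) = f (a, b + m)"
  by (simp add: V_def)

lemma bounded_coherent_U: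
  assumes f: "f \<in> bounded_coherent"
  shows "U l f \<in> bounded_coherent"
proof -
  obtain B where B: "\<And>q. chs_norm H (f q) \<le> B"
    using bounded_coherent_bound[OF f] by blast
  show ?thesis
  proof (rule bounded_coherentI)
    show "U l f q \<in> carrier H" for q
      using f by (simp add: U_def)
    show "chs_norm H (U l f q) \<le> B" for q
      using f B[of "(fst q + l, snd q)"] by (simp add: U_def chs_norm_smult)
    show "coherent (U l f)"
      unfolding coherent_def
    proof (intro allI impI)
      fix a b c e :: real and x
      assume ce: "0 \<le> c" "0 \<le> e" and x: "x \<in> carrier H"
      have "inner H (U l f (a, b)) x = cis (- (l * b)) * inner H (f (a + l, b)) x"
        using f x by simp
      also have "\<dots> = (cis (- (l * b)) * cis (- ((a + l) * e))) * inner H (f (a + c + l, b + e)) (W c e x)"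
        using bounded_coherentD[OF f ce x, of "a + l" b] by (simp add: ac_simps)
      also have "cis (- (l * b)) * cis (- ((a + l) * e)) = cis (- (a * e)) * cis (- (l * (b + e)))"
        by (simp add: cis_mult algebra_simps)
      also have "\<dots> * inner H (f (a + c + l, b + e)) (W c e x) =
          cis (- (a * e)) * inner H (U l f (a + c, b + e)) (W c e x)"
        using f x ce by simp
      finally show "inner H (U l f (a, b)) x = cis (- (a * e)) * inner H (U l f (a + c, b + e)) (W c e x)" .
    qed
  qed
qed

lemma bounded_coherent_V:
  assumes f: "f \<in> bounded_coherent"
  shows "V m f \<in> bounded_coherent"
proof -
  obtain B where B: "\<And>q. chs_norm H (f q) \<le> B"
    using bounded_coherent_bound[OF f] by blast
  show ?thesis
  proof (rule bounded_coherentI)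
    show "V m f q \<in> carrier H" for q
      using f by (simp add: V_def)
    show "chs_norm H (V m f q) \<le> B" for q
      using B[of "(fst q, snd q + m)"] by (simp add: V_def)
    show "coherent (V m f)"
      unfolding coherent_def
    proof (intro allI impI)
      fix a b c e :: real and x
      assume ce: "0 \<le> c" "0 \<le> e" and x: "x \<in> carrier H"
      show "inner H (V m f (a, b)) x = cis (- (a * e)) * inner H (V m f (a + c, b + e)) (W c e x)"
        using bounded_coherentD[OF f ce x, of a "b + m"] by (simp add: ac_simps)
    qed
  qed
qed

lemma dilation_inner_shift:
  assumes "f \<in> bounded_coherent" "g \<in> bounded_coherent"
    and "\<And>q. inner H (f' q) (g' q) = inner H (f (fst q + a, snd q + b)) (g (fst q + a, snd q + b))"
  shows "dilation_inner f' g' = dilation_inner f g"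
proof (rule dilation_inner_eqI)
  show "((\<lambda>q. inner H (f' q) (g' q)) \<longlongrightarrow> dilation_inner f g) (at_top \<times>\<^sub>F at_top)"
    unfolding assms(3)
    using filterlim_compose[OF bounded_coherent_cinner_tendsto[OF assms(1,2)] filterlim_shift_corner] by simp
qed

lemma U_isometry: "isometry dilation_space dilation_space (U l)"
  unfolding isometry_def lin_op_def
proof (intro conjI ballI allI)
  fix f g
  assume f: "f \<in> carrier dilation_space" and g: "g \<in> carrier dilation_space"
  show "U l f \<in> carrier dilation_space"
    using f by (simp add: bounded_coherent_U)
  show "U l (add dilation_space f g) = add dilation_space (U l f) (U l g)"
    using f g by (simp add: fun_eq_iff U_def chs_smult_add_right)
  show "U l (smult dilation_space c f) = smult dilation_space c (U l f)" for c
    using f by (simp add: fun_eq_iff U_def mult.commute)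
  show "inner dilation_space (U l f) (U l g) = inner dilation_space f g"
    using f g by (simp, intro dilation_inner_shift[where a = l and b = 0])
      (simp_all add: U_def cis_cnj mult.assoc[symmetric] cis_mult)
qed

lemma V_isometry: "isometry dilation_space dilation_space (V m)"
  unfolding isometry_def lin_op_def
proof (intro conjI ballI allI)
  fix f g
  assume f: "f \<in> carrier dilation_space" and g: "g \<in> carrier dilation_space"
  show "V m f \<in> carrier dilation_space"
    using f by (simp add: bounded_coherent_V)
  show "V m (add dilation_space f g) = add dilation_space (V m f) (V m g)"
    by (simp add: fun_eq_iff V_def)
  show "V m (smult dilation_space c f) = smult dilation_space c (V m f)" for c
    by (simp add: fun_eq_iff V_def)
  show "inner dilation_space (V m f) (V m g) = inner dilation_space f g"
    using f g by (simp, intro dilation_inner_shift[where a = 0 and b = m]) (simp_all add: V_def)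
qed

lemma U_0: "f \<in> bounded_coherent \<Longrightarrow> U 0 f = f"
  by (simp add: fun_eq_iff U_def)

lemma V_0: "V 0 f = f"
  by (simp add: fun_eq_iff V_def)

lemma U_add: "f \<in> bounded_coherent \<Longrightarrow> U (s + t) f = U s (U t f)"
  by (simp add: fun_eq_iff U_def cis_mult algebra_simps)

lemma V_add: "V (s + t) f = V s (V t f)"
  by (simp add: fun_eq_iff V_def algebra_simps)

lemma U_V_weyl: "f \<in> bounded_coherent \<Longrightarrow> U l (V m f) = smult dilation_space (cis (l * m)) (V m (U l f))"
  by (simp add: fun_eq_iff U_def V_def cis_mult algebra_simps)

definition W_adj :: "real \<Rightarrow> real \<Rightarrow> 'a \<Rightarrow> 'a" where
  "W_adj c e y = (SOME z. z \<in> carrier H \<and> (\<forall>x\<in>carrier H. inner H z x = inner H y (W c e x)))"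

lemma W_adj:
  assumes "0 \<le> c" "0 \<le> e" "y \<in> carrier H"
  shows W_adj_closed: "W_adj c e y \<in> carrier H"
    and cinner_W_adj: "\<And>x. x \<in> carrier H \<Longrightarrow> inner H (W_adj c e y) x = inner H y (W c e x)"
proof -
  obtain z where "z \<in> carrier H" "\<And>x. x \<in> carrier H \<Longrightarrow> inner H z x = inner H y (W c e x)"
    using isometry_adjoint_exists[OF W_isometry[OF assms(1,2)] assms(3)] by blast
  then have "\<exists>z. z \<in> carrier H \<and> (\<forall>x\<in>carrier H. inner H z x = inner H y (W c e x))"
    by blast
  from someI_ex[OF this]
  show "W_adj c e y \<in> carrier H" "\<And>x. x \<in> carrier H \<Longrightarrow> inner H (W_adj c e y) x = inner H y (W c e x)"
    unfolding W_adj_def by auto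
qed

lemma W_pairing_refine:
  assumes x: "x \<in> carrier H" and y: "y \<in> carrier H"
    and ce: "0 \<le> c" "0 \<le> e" "0 \<le> a + c" "0 \<le> b + e" and ce': "0 \<le> c'" "0 \<le> e'"
  shows "cis (- (a * (e + e'))) * inner H (W (a + (c + c')) (b + (e + e')) x) (W (c + c') (e + e') y) =
    cis (- (a * e)) * inner H (W (a + c) (b + e) x) (W c e y)"
proof -
  have nonneg: "0 \<le> a + (c + c')" "0 \<le> b + (e + e')" "0 \<le> c + c'" "0 \<le> e + e'"
    using ce ce' by auto
  have "W (a + (c + c')) (b + (e + e')) x = smult H (cis (e' * (a + c))) (W c' e' (W (a + c) (b + e) x))"
    using W_mult[OF ce' ce(3,4) x] x nonneg by (simp add: cis_mult ac_simps)
  moreover have "W (c + c') (e + e') y = smult H (cis (e' * c)) (W c' e' (W c e y))"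
    using W_mult[OF ce' ce(1,2) y] y nonneg by (simp add: cis_mult ac_simps)
  moreover have "inner H (W c' e' (W (a + c) (b + e) x)) (W c' e' (W c e y)) = inner H (W (a + c) (b + e) x) (W c e y)"
    using x y ce ce' by (simp add: isometry_cinner[OF W_isometry])
  moreover have "cis (- (a * (e + e'))) * cis (e' * (a + c)) * cnj (cis (e' * c)) = cis (- (a * e))"
    by (simp add: cis_cnj cis_mult algebra_simps)
  ultimately show ?thesis
    using x y ce ce' by (simp add: ac_simps)
qed

lemma W_pairing_indep:
  assumes x: "x \<in> carrier H" and y: "y \<in> carrier H"
    and ce: "0 \<le> c" "0 \<le> e" "0 \<le> a + c" "0 \<le> b + e"
    and ce': "0 \<le> c'" "0 \<le> e'" "0 \<le> a + c'" "0 \<le> b + e'"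
  shows "cis (- (a * e)) * inner H (W (a + c) (b + e) x) (W c e y) =
    cis (- (a * e')) * inner H (W (a + c') (b + e') x) (W c' e' y)"
  using W_pairing_refine[OF x y ce, of "max c c' - c" "max e e' - e"]
    W_pairing_refine[OF x y ce', of "max c c' - c'" "max e e' - e'"] by simp

text \<open>On the quadrant \<open>a, b \<ge> 0\<close> the family \<open>J x\<close> is \<open>W(a, b) x\<close> (\<open>J_nonneg\<close>); elsewhere it is
  determined by coherence, here via the shift by \<open>(\<bar>a\<bar>, \<bar>b\<bar>)\<close> into the quadrant.\<close>

definition J :: "'a \<Rightarrow> real \<times> real \<Rightarrow> 'a" where
  "J x q = smult H (cis (- (fst q * \<bar>snd q\<bar>)))
      (W_adj \<bar>fst q\<bar> \<bar>snd q\<bar> (W (fst q + \<bar>fst q\<bar>) (snd q + \<bar>snd q\<bar>) x))"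

lemma J_closed [simp, intro]: "x \<in> carrier H \<Longrightarrow> J x q \<in> carrier H"
  unfolding J_def by (intro smult_closed W_adj_closed W_closed) auto

lemma cinner_J:
  assumes "x \<in> carrier H" "y \<in> carrier H" "0 \<le> c" "0 \<le> e" "0 \<le> a + c" "0 \<le> b + e"
  shows "inner H (J x (a, b)) y = cis (- (a * e)) * inner H (W (a + c) (b + e) x) (W c e y)"
proof -
  have "inner H (J x (a, b)) y = cis (- (a * \<bar>b\<bar>)) * inner H (W (a + \<bar>a\<bar>) (b + \<bar>b\<bar>) x) (W \<bar>a\<bar> \<bar>b\<bar> y)"
    using assms abs_ge_self[of a] abs_ge_self[of b]
    by (simp add: J_def cinner_W_adj W_adj_closed add.commute[of _ "\<bar>_\<bar>"] abs_ge_minus_self)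
  also have "\<dots> = cis (- (a * e)) * inner H (W (a + c) (b + e) x) (W c e y)"
    using assms by (intro W_pairing_indep) auto
  finally show ?thesis .
qed

lemma J_nonneg: "x \<in> carrier H \<Longrightarrow> 0 \<le> a \<Longrightarrow> 0 \<le> b \<Longrightarrow> J x (a, b) = W a b x"
  by (rule chs_eqI) (simp_all add: cinner_J[where c = 0 and e = 0])

lemma coherent_J:
  assumes x: "x \<in> carrier H"
  shows "coherent (J x)"
  unfolding coherent_def
proof (intro allI impI)
  fix a b c e :: real and y
  assume ce: "0 \<le> c" "0 \<le> e" and y: "y \<in> carrier H"
  define c1 e1 where "c1 = \<bar>a + c\<bar>" and "e1 = \<bar>b + e\<bar>"
  have ce1: "0 \<le> c1" "0 \<le> e1" "0 \<le> a + c + c1" "0 \<le> b + e + e1"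
    by (auto simp: c1_def e1_def)
  have "inner H (J x (a + c, b + e)) (W c e y) =
      cis (- ((a + c) * e1)) * inner H (W (a + c + c1) (b + e + e1) x) (W c1 e1 (W c e y))"
    using x y ce ce1 by (intro cinner_J) auto
  also have "W c1 e1 (W c e y) = smult H (cis (- (e1 * c))) (W (c1 + c) (e1 + e) y)"
    using ce ce1 y by (intro W_mult) auto
  finally have "cis (- (a * e)) * inner H (J x (a + c, b + e)) (W c e y) =
      cis (- (a * (e1 + e))) * inner H (W (a + (c1 + c)) (b + (e1 + e)) x) (W (c1 + c) (e1 + e) y)"
    using x y ce ce1 by (simp add: cis_cnj cis_mult ac_simps algebra_simps)
  also have "\<dots> = inner H (J x (a, b)) y"
    using x y ce ce1 by (intro cinner_J[symmetric]) auto
  finally show "inner H (J x (a, b)) y = cis (- (a * e)) * inner H (J x (a + c, b + e)) (W c e y)"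
    by simp
qed

lemma chs_norm_J_le:
  assumes x: "x \<in> carrier H"
  shows "chs_norm H (J x q) \<le> chs_norm H x"
proof -
  obtain a b where q: "q = (a, b)"
    by fastforce
  have "chs_norm H (J x (a, b)) \<le> chs_norm H (W (a + \<bar>a\<bar>) (b + \<bar>b\<bar>) x)"
    by (rule chs_norm_le_if_cinner_isometry[OF W_isometry[of "\<bar>a\<bar>" "\<bar>b\<bar>"], where c = "cis (- (a * \<bar>b\<bar>))"])
      (use x cinner_J[OF x J_closed[OF x], of "\<bar>a\<bar>" "\<bar>b\<bar>" a b] in simp_all)
  then show ?thesis
    using x by (simp add: q isometry_norm[OF W_isometry])
qed

lemma bounded_coherent_J: "x \<in> carrier H \<Longrightarrow> J x \<in> bounded_coherent"
  by (rule bounded_coherentI[OF J_closed coherent_J chs_norm_J_le])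

lemma bounded_coherent_eqI:
  assumes f: "f \<in> bounded_coherent" and g: "g \<in> bounded_coherent"
    and eq: "\<And>a b. 0 \<le> a \<Longrightarrow> 0 \<le> b \<Longrightarrow> f (a, b) = g (a, b)"
  shows "f = g"
proof
  fix q
  obtain a b :: real where q: "q = (a, b)"
    by fastforce
  have "inner H (f (a, b)) y = inner H (g (a, b)) y" if y: "y \<in> carrier H" for y
  proof -
    have "inner H (f (a, b)) y = cis (- (a * \<bar>b\<bar>)) * inner H (f (a + \<bar>a\<bar>, b + \<bar>b\<bar>)) (W \<bar>a\<bar> \<bar>b\<bar> y)"
      using f y by (intro bounded_coherentD) auto
    also have "f (a + \<bar>a\<bar>, b + \<bar>b\<bar>) = g (a + \<bar>a\<bar>, b + \<bar>b\<bar>)"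
      by (intro eq) auto
    also have "cis (- (a * \<bar>b\<bar>)) * inner H (g (a + \<bar>a\<bar>, b + \<bar>b\<bar>)) (W \<bar>a\<bar> \<bar>b\<bar> y) = inner H (g (a, b)) y"
      using g y by (intro bounded_coherentD[symmetric]) auto
    finally show ?thesis .
  qed
  then show "f q = g q"
    using f g unfolding q by (intro chs_eqI) auto
qed

lemma J_isometry: "isometry H dilation_space J"
  unfolding isometry_def lin_op_def
proof (intro conjI ballI allI)
  fix x y
  assume x: "x \<in> carrier H" and y: "y \<in> carrier H"
  show "J x \<in> carrier dilation_space"
    using x by (simp add: bounded_coherent_J)
  show "J (add H x y) = add dilation_space (J x) (J y)"
    using x y by (intro bounded_coherent_eqI)
      (simp_all add: bounded_coherent_J bounded_coherent_add J_nonneg W_def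
        lin_op_add[OF isometry_lin_op[OF sc_isometry_semigroup_isometry[OF S]]]
        lin_op_add[OF isometry_lin_op[OF sc_isometry_semigroup_isometry[OF T]]])
  show "J (smult H c x) = smult dilation_space c (J x)" for c
    using x by (intro bounded_coherent_eqI)
      (simp_all add: bounded_coherent_J bounded_coherent_smult J_nonneg W_def
        lin_op_smult[OF isometry_lin_op[OF sc_isometry_semigroup_isometry[OF S]]]
        lin_op_smult[OF isometry_lin_op[OF sc_isometry_semigroup_isometry[OF T]]])
  have "((\<lambda>q. inner H (J x q) (J y q)) \<longlongrightarrow> inner H x y) (at_top \<times>\<^sub>F at_top)"
  proof (rule tendsto_eventually)
    show "\<forall>\<^sub>F q in at_top \<times>\<^sub>F at_top. inner H (J x q) (J y q) = inner H x y"
      using eventually_ge_corner[of 0 0]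
      by eventually_elim (use x y in \<open>auto simp: J_nonneg isometry_cinner[OF W_isometry]\<close>)
  qed
  then show "inner dilation_space (J x) (J y) = inner H x y"
    by (simp add: dilation_inner_eqI)
qed

lemma dilation_inner_J:
  assumes h: "h \<in> bounded_coherent" and y: "y \<in> carrier H"
  shows "dilation_inner h (J y) = inner H (h (0, 0)) y"
proof (rule dilation_inner_eqI, rule tendsto_eventually)
  show "\<forall>\<^sub>F q in at_top \<times>\<^sub>F at_top. inner H (h q) (J y q) = inner H (h (0, 0)) y"
    using eventually_ge_corner[of 0 0]
  proof eventually_elim
    case (elim q)
    then show ?case
      using bounded_coherentD[OF h _ _ y, of "fst q" "snd q" 0 0] J_nonneg[OF y, of "fst q" "snd q"] h y
      by simp
  qed
qed

lemma U_J:
  assumes l: "0 \<le> l" and x: "x \<in> carrier H"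
  shows "U l (J x) = J (S l x)"
proof (rule bounded_coherent_eqI)
  fix a b :: real
  assume ab: "0 \<le> a" "0 \<le> b"
  have "W a b (W l 0 x) = smult H (cis (- (b * l))) (W (a + l) (b + 0) x)"
    using ab l x by (intro W_mult) auto
  moreover have "W l 0 x = S l x"
    using x T by (simp add: W_def sc_isometry_semigroup_0)
  ultimately show "U l (J x) (a, b) = J (S l x) (a, b)"
    using ab l x by (simp add: J_nonneg mult.commute)
qed (use l x in \<open>simp_all add: bounded_coherent_U bounded_coherent_J\<close>)

lemma V_J:
  assumes m: "0 \<le> m" and x: "x \<in> carrier H"
  shows "V m (J x) = J (T m x)"
proof (rule bounded_coherent_eqI)
  fix a b :: real
  assume ab: "0 \<le> a" "0 \<le> b"
  have "W a b (W 0 m x) = smult H (cis (- (b * 0))) (W (a + 0) (b + m) x)"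
    using ab m x by (intro W_mult) auto
  moreover have "W 0 m x = T m x"
    using m x S by (simp add: W_def sc_isometry_semigroup_0)
  ultimately show "V m (J x) (a, b) = J (T m x) (a, b)"
    using ab m x by (simp add: J_nonneg)
qed (use m x in \<open>simp_all add: bounded_coherent_V bounded_coherent_J\<close>)

interpretation K: complex_hilbert dilation_space
  by (rule complex_hilbert_dilation_space)

lemma orth_proj_J:
  assumes "x \<in> carrier H"
  shows "orth_proj dilation_space (J ` carrier H) (J x) = J x"
proof (rule K.orth_proj_eq_self)
  show "J ` carrier H \<subseteq> carrier dilation_space"
    by (auto simp: bounded_coherent_J)
  show "chs_sub dilation_space u w \<in> J ` carrier H" if "u \<in> J ` carrier H" "w \<in> J ` carrier H" for u w
    using that by (auto simp flip: lin_op_diff[OF isometry_lin_op[OF J_isometry]])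
qed (use assms in simp)

section \<open>Strong continuity\<close>

text \<open>The vectors \<open>V (-c) (U (-c) (J y))\<close> are dense: for \<open>y = f (c, c)\<close> the squared distance to \<open>f\<close> is
  \<open>\<parallel>f\<parallel>\<^sup>2 - \<parallel>f (c, c)\<parallel>\<^sup>2\<close>, which tends to \<open>0\<close> as \<open>c \<rightarrow> \<infinity>\<close>.\<close>

lemma dist_translate_J:
  assumes f: "f \<in> bounded_coherent"
  shows "(chs_dist dilation_space f (V (- c) (U (- c) (J (f (c, c))))))\<^sup>2 =
    (chs_norm dilation_space f)\<^sup>2 - (chs_norm H (f (c, c)))\<^sup>2"
proof -
  define y where "y = f (c, c)"
  have y: "y \<in> carrier H"
    using f by (simp add: y_def)
  define g where "g = V (- c) (U (- c) (J y))"
  have g: "g \<in> bounded_coherent"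
    using y by (simp add: g_def bounded_coherent_V bounded_coherent_U bounded_coherent_J)
  have norm_g: "chs_norm dilation_space g = chs_norm H y"
    using y isometry_norm[OF V_isometry] isometry_norm[OF U_isometry] isometry_norm[OF J_isometry]
    by (simp add: g_def bounded_coherent_U bounded_coherent_J)
  have "U c (V c g) = J y"
    using y by (simp add: g_def V_add[symmetric] U_add[symmetric] V_0 U_0 bounded_coherent_U bounded_coherent_J)
  then have "dilation_inner f g = dilation_inner (U c (V c f)) (J y)"
    using f g isometry_cinner[OF U_isometry] isometry_cinner[OF V_isometry]
    by (metis bounded_coherent_V dilation_space_simps(1,5))
  also have "\<dots> = inner H y y"
    using f y by (simp add: dilation_inner_J bounded_coherent_U bounded_coherent_V y_def)
  finally have "Re (inner dilation_space f g) = (chs_norm H y)\<^sup>2"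
    using y by (simp add: chs_norm_power2)
  then show ?thesis
    using K.chs_dist_power2[of f g] f g norm_g by (simp add: g_def y_def)
qed

lemma translate_J_dense:
  assumes f: "f \<in> bounded_coherent" and e: "e > 0"
  obtains c y where "y \<in> carrier H" "chs_dist dilation_space f (V (- c) (U (- c) (J y))) < e"
proof -
  have "((\<lambda>n. (chs_norm H (f (real n, real n)))\<^sup>2) \<longlongrightarrow> (chs_norm dilation_space f)\<^sup>2) sequentially"
  proof -
    have "filterlim (\<lambda>n. (real n, real n)) (at_top \<times>\<^sub>F at_top) sequentially"
      by (intro filterlim_Pair filterlim_real_sequentially)
    moreover have "(chs_norm dilation_space f)\<^sup>2 = (SUP q. (chs_norm H (f q))\<^sup>2)"
      using K.chs_norm_power2[of f] f by (simp add: dilation_inner_self)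
    ultimately show ?thesis
      using filterlim_compose[OF bounded_coherent_norm_tendsto[OF f]] by simp
  qed
  moreover have "(chs_norm dilation_space f)\<^sup>2 - e\<^sup>2 < (chs_norm dilation_space f)\<^sup>2"
    using e by simp
  ultimately have "\<forall>\<^sub>F n in sequentially. (chs_norm dilation_space f)\<^sup>2 - e\<^sup>2 < (chs_norm H (f (real n, real n)))\<^sup>2"
    by (rule order_tendstoD(1))
  then obtain n where "(chs_norm dilation_space f)\<^sup>2 - e\<^sup>2 < (chs_norm H (f (real n, real n)))\<^sup>2"
    unfolding eventually_sequentially by blast
  then have "(chs_dist dilation_space f (V (- real n) (U (- real n) (J (f (real n, real n))))))\<^sup>2 < e\<^sup>2"
    using dist_translate_J[OF f] by simp
  then have "chs_dist dilation_space f (V (- real n) (U (- real n) (J (f (real n, real n))))) < e"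
    using e by (simp add: power_less_imp_less_base)
  then show ?thesis
    using that f by blast
qed

lemma group_J_tendsto_0:
  fixes G :: "real \<Rightarrow> (real \<times> real \<Rightarrow> 'a) \<Rightarrow> real \<times> real \<Rightarrow> 'a" and P :: "real \<Rightarrow> 'a \<Rightarrow> 'a"
  assumes G: "\<And>t. isometry dilation_space dilation_space (G t)"
    and G_0: "\<And>f. f \<in> bounded_coherent \<Longrightarrow> G 0 f = f"
    and G_add: "\<And>s t f. f \<in> bounded_coherent \<Longrightarrow> G (s + t) f = G s (G t f)"
    and P: "sc_isometry_semigroup H P" and GJ: "\<And>t x. 0 \<le> t \<Longrightarrow> x \<in> carrier H \<Longrightarrow> G t (J x) = J (P t x)"
    and y: "y \<in> carrier H"
  shows "((\<lambda>h. chs_dist dilation_space (G h (J y)) (J y)) \<longlongrightarrow> 0) (at 0)"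
proof -
  have Py: "P t y \<in> carrier H" if "0 \<le> t" for t
    using isometry_closed[OF sc_isometry_semigroup_isometry[OF P that] y] .
  have eq: "chs_dist dilation_space (G h (J y)) (J y) = chs_dist H (P \<bar>h\<bar> y) y" for h
  proof (cases "0 \<le> h")
    case True
    then show ?thesis
      using GJ[OF True y] isometry_dist[OF J_isometry Py[OF True] y] by simp
  next
    case False
    have Jy: "J y \<in> carrier dilation_space" "G h (J y) \<in> carrier dilation_space"
      using y isometry_closed[OF G] by (auto simp: bounded_coherent_J)
    have "chs_dist dilation_space (G h (J y)) (J y) = chs_dist dilation_space (G (- h) (G h (J y))) (G (- h) (J y))"
      using K.isometry_dist[OF G Jy(2,1)] by simp
    also have "\<dots> = chs_dist dilation_space (J y) (J (P (- h) y))"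
      using False y G_add[of "J y" "- h" h] G_0 GJ[of "- h" y] Jy by simp
    also have "\<dots> = chs_dist H (P \<bar>h\<bar> y) y"
      using False y Py[of "- h"] isometry_dist[OF J_isometry] chs_dist_commute by simp
    finally show ?thesis .
  qed
  have "filterlim abs (at 0 within {0..}) (at (0 :: real))"
    unfolding filterlim_at by (auto intro!: tendsto_rabs_zero tendsto_ident_at simp: eventually_at_filter)
  from filterlim_compose[OF sc_isometry_semigroup_tendsto_0[OF P y] this]
  show ?thesis
    unfolding eq .
qed

lemma group_tendsto_0_dilation:
  fixes G :: "real \<Rightarrow> (real \<times> real \<Rightarrow> 'a) \<Rightarrow> real \<times> real \<Rightarrow> 'a" and P :: "real \<Rightarrow> 'a \<Rightarrow> 'a"
  assumes G: "\<And>t. isometry dilation_space dilation_space (G t)"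
    and G_0: "\<And>f. f \<in> bounded_coherent \<Longrightarrow> G 0 f = f"
    and G_add: "\<And>s t f. f \<in> bounded_coherent \<Longrightarrow> G (s + t) f = G s (G t f)"
    and P: "sc_isometry_semigroup H P" and GJ: "\<And>t x. 0 \<le> t \<Longrightarrow> x \<in> carrier H \<Longrightarrow> G t (J x) = J (P t x)"
    and twist: "\<And>c h f. f \<in> bounded_coherent \<Longrightarrow>
      G h (V (- c) (U (- c) f)) = smult dilation_space (cis (h * k c)) (V (- c) (U (- c) (G h f)))"
    and f: "f \<in> bounded_coherent"
  shows "((\<lambda>h. chs_dist dilation_space (G h f) f) \<longlongrightarrow> 0) (at 0)"
proof (rule K.isometry_group_tendsto_0_if_dense[OF G])
  fix e :: real
  assume "e > 0"
  then obtain c y where y: "y \<in> carrier H"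
    and close: "chs_dist dilation_space f (V (- c) (U (- c) (J y))) < e"
    using translate_J_dense[OF f \<open>e > 0\<close>] by blast
  define A where "A = (\<lambda>g. V (- c) (U (- c) g))"
  have A: "isometry dilation_space dilation_space A"
    unfolding A_def by (rule isometry_comp[OF U_isometry V_isometry])
  have Jy: "J y \<in> carrier dilation_space"
    using y by (simp add: bounded_coherent_J)
  have "G h (A (J y)) = smult dilation_space (cis (h * k c)) (A (G h (J y)))" for h
    unfolding A_def using y by (intro twist bounded_coherent_J)
  from K.isometry_group_tendsto_0_twisted[OF A G this Jy group_J_tendsto_0[OF G G_0 G_add P GJ y]]
  show "\<exists>\<xi>\<in>carrier dilation_space. chs_dist dilation_space f \<xi> < e \<and>
      ((\<lambda>h. chs_dist dilation_space (G h \<xi>) \<xi>) \<longlongrightarrow> 0) (at 0)"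
    using close isometry_closed[OF A Jy] unfolding A_def by blast
qed (use f in simp)

lemma sc_unitary_group_dilationI:
  fixes G :: "real \<Rightarrow> (real \<times> real \<Rightarrow> 'a) \<Rightarrow> real \<times> real \<Rightarrow> 'a" and P :: "real \<Rightarrow> 'a \<Rightarrow> 'a"
  assumes G: "\<And>t. isometry dilation_space dilation_space (G t)"
    and G_0: "\<And>f. f \<in> bounded_coherent \<Longrightarrow> G 0 f = f"
    and G_add: "\<And>s t f. f \<in> bounded_coherent \<Longrightarrow> G (s + t) f = G s (G t f)"
    and P: "sc_isometry_semigroup H P" and GJ: "\<And>t x. 0 \<le> t \<Longrightarrow> x \<in> carrier H \<Longrightarrow> G t (J x) = J (P t x)"
    and twist: "\<And>c h f. f \<in> bounded_coherent \<Longrightarrow>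
      G h (V (- c) (U (- c) f)) = smult dilation_space (cis (h * k c)) (V (- c) (U (- c) (G h f)))"
  shows "sc_unitary_group dilation_space G"
  unfolding sc_unitary_group_def
proof (intro conjI allI ballI)
  show "unitary dilation_space (G t)" for t
    using G G_0 G_add by (intro unitary_if_isometry_group) auto
  show "G 0 f = f" if "f \<in> carrier dilation_space" for f
    using that by (intro G_0) simp
  show "G (s + t) f = G s (G t f)" if "f \<in> carrier dilation_space" for f s t
    using that by (intro G_add) simp
  show "((\<lambda>s. chs_dist dilation_space (G s f) (G t f)) \<longlongrightarrow> 0) (at t)"
    if "f \<in> carrier dilation_space" for f t
    using that group_tendsto_0_dilation[OF G G_0 G_add P GJ twist]
    by (intro K.isometry_group_tendsto_if_tendsto_0[OF G]) (simp_all add: G_add)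
qed

lemma sc_unitary_group_U: "sc_unitary_group dilation_space U"
proof (rule sc_unitary_group_dilationI[where P = S and k = uminus])
  show "U h (V (- c) (U (- c) f)) = smult dilation_space (cis (h * - c)) (V (- c) (U (- c) (U h f)))"
    if "f \<in> bounded_coherent" for c h f
    using that U_add[of f h "- c"] U_add[of f "- c" h]
    by (simp add: U_V_weyl bounded_coherent_U add.commute)
qed (use U_isometry U_0 U_add U_J S in auto)

lemma sc_unitary_group_V: "sc_unitary_group dilation_space V"
proof (rule sc_unitary_group_dilationI[where P = T and k = id])
  show "V h (V (- c) (U (- c) f)) = smult dilation_space (cis (h * id c)) (V (- c) (U (- c) (V h f)))"
    if "f \<in> bounded_coherent" for c h f
  proof -
    have "U (- c) (V h f) = smult dilation_space (cis (- (c * h))) (V h (U (- c) f))"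
      using that by (simp add: U_V_weyl)
    then have "V h (U (- c) f) = smult dilation_space (cis (c * h)) (U (- c) (V h f))"
      using that by (simp add: bounded_coherent_U bounded_coherent_V cis_mult)
    moreover have "V h (V (- c) g) = V (- c) (V h g)" for g
      using V_add[of h "- c" g] V_add[of "- c" h g] by (simp add: add.commute)
    moreover have "V (- c) (smult dilation_space (cis (c * h)) g) = smult dilation_space (cis (c * h)) (V (- c) g)"
      if "g \<in> bounded_coherent" for g
      using lin_op_smult[OF isometry_lin_op[OF V_isometry]] that by simp
    ultimately show ?thesis
      using that by (simp add: bounded_coherent_U bounded_coherent_V mult.commute)
  qed
qed (use V_isometry V_0 V_add V_J T in auto)

end

theorem theorem4p2:
  fixes H :: "'a chs" and S T :: "real \<Rightarrow> 'a \<Rightarrow> 'a"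
  assumes "complex_hilbert_space H"
    and "sc_isometry_semigroup H S"
    and "sc_isometry_semigroup H T"
    and "\<forall>l\<ge>0. \<forall>m\<ge>0. \<forall>x\<in>carrier H.
           S l (T m x) = smult H (exp (\<i> * complex_of_real (l * m))) (T m (S l x))"
  shows "\<exists>(K :: (real \<times> real \<Rightarrow> 'a) chs) (J :: 'a \<Rightarrow> (real \<times> real \<Rightarrow> 'a)) U V.
           complex_hilbert_space K
         \<and> isometry H K J
         \<and> sc_unitary_group K U
         \<and> sc_unitary_group K V
         \<and> (\<forall>l m. \<forall>v\<in>carrier K.
              U l (V m v) = smult K (exp (\<i> * complex_of_real (l * m))) (V m (U l v)))
         \<and> (\<forall>l\<ge>0. \<forall>x\<in>carrier H. orth_proj K (J ` carrier H) (U l (J x)) = J (S l x))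
         \<and> (\<forall>m\<ge>0. \<forall>x\<in>carrier H. orth_proj K (J ` carrier H) (V m (J x)) = J (T m x))"
proof -
  interpret weyl_pair H S T
    using assms unfolding weyl_pair_def weyl_pair_axioms_def complex_hilbert_iff by blast
  have "complex_hilbert_space dilation_space"
    using complex_hilbert_dilation_space by (simp add: complex_hilbert_iff)
  moreover have "\<forall>l m. \<forall>v\<in>carrier dilation_space.
      U l (V m v) = smult dilation_space (exp (\<i> * complex_of_real (l * m))) (V m (U l v))"
    by (simp add: U_V_weyl cis_conv_exp)
  moreover have "\<forall>l\<ge>0. \<forall>x\<in>carrier H. orth_proj dilation_space (J ` carrier H) (U l (J x)) = J (S l x)"
    by (simp add: U_J orth_proj_J)
  moreover have "\<forall>m\<ge>0. \<forall>x\<in>carrier H. orth_proj dilation_space (J ` carrier H) (V m (J x)) = J (T m x)"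
    by (simp add: V_J orth_proj_J)
  ultimately show ?thesis
    using J_isometry sc_unitary_group_U sc_unitary_group_V by blast
qed

end
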